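(* Let $n \geq 3$ and let $\mathcal{S}=(S,\boldsymbol{\tau})$ be a species tree on $X=\{x_1,\ldots,x_n\}$. Suppose $\mathcal{S}$ contains a pendant subtree $\mathcal{S}'$ on $m$ leaves, $3 \le m \le n$, whose two maximal pendant subtrees are a subtree on the $m-1$ leaves $x_1,\ldots,x_{m-1}$ and a subtree consisting of the single leaf $x_m$. Then: (i) $FP_{\mathcal{S}}(x_m) > FP_{\mathcal{S}}(x_i)$ for all $x_i \in \{x_1,\ldots,x_{m-1}\}$; (ii) $\mathbb{E}[FP(x_m)\mid \mathcal{S}] > \mathbb{E}[FP(x_i)\mid \mathcal{S}]$ for all $x_i \in \{x_1,\ldots,x_{m-1}\}$.
   Context: A species tree $\mathcal{S}=(S,\boldsymbol{\tau})$ on $X=\{x_1,\dots,x_n\}$ consists of a rooted binary phylogenetic tree $S$ with leaf set $X$ together with a vector $\boldsymbol{\tau}=(\tau_0,\tau_1,\ldots,\tau_{n-1})$ of positive interval lengths (in coalescent units), where $\tau_0$ is the time from the leaves (time $0$) to the most recent speciation event (internal vertex), $\tau_i$ ($1\le i\le n-2$) is the time between the $i$-th and $(i+1)$-th speciation events, no two speciation events occur at the same time, and $\tau_{n-1}=\infty$ is the interval above the root. Thus $\mathcal{S}$ is ultrametric (all leaves at equal distance from the root). A vertex $v$ of a tree determines the pendant subtree rooted at $v$; the two maximal pendant subtrees of a rooted binary tree are those rooted at the two children of its root. Gene trees are generated under the multispecies coalescent on $\mathcal{S}$: one gene lineage starts at each leaf at time $0$ and lineages are traced backward in time; within each branch (population)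 of $\mathcal{S}$, any pair among the $k$ lineages present coalesces at rate $1$ (total rate $\binom{k}{2}$), lineages in sister populations enter their common ancestral population at the speciation time, and above the root all remaining lineages coalesce in a single population of infinite duration. The result is a random ultrametric rooted binary tree $h$ (a gene tree history) on leaf set $X$ with edge lengths given by the coalescent times; its expectation is taken over both the history and the coalescent times. For a rooted tree $T$ with root $\rho$, leaf set $X$ and nonnegative edge lengths $l(e)$, the Fair Proportion index is $FP_T(x_i)=\sum_{e\in P(T;\rho,x_i)} l(e)/n(e)$, where $P(T;\rho,x_i)$ is the path from $\rho$ to $x_i$ and $n(e)$ is the number of leaves descending from $e$. $FP_{\mathcal{S}}(x_i)$ denotes this index on the species tree with its branch lengths (edges above the root are excluded), and $\mathbb{E}[FP(x_i)\mid\mathcal{S}]$ denotes the expected value of $FP_h(x_i)$ for the random gene tree $h$ generated under the multispecies coalescent on $\mathcal{S}$ (edge lengths of $h$ measured in the same units, from the leaves at time $0$). *)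

theory Defs
  imports "HOL-Analysis.Analysis"
begin

text \<open>A rooted binary tree with leaf labels (natural numbers) whose internal
  vertices carry their height (time above the leaves, leaves are at time 0).
  Used both for species trees and for gene tree histories.\<close>

datatype utree = Leaf nat | Node real utree utree

fun ht :: "utree \<Rightarrow> real" where
  "ht (Leaf x) = 0"
| "ht (Node h l r) = h"

fun leaves :: "utree \<Rightarrow> nat list" where
  "leaves (Leaf x) = [x]"
| "leaves (Node h l r) = leaves l @ leaves r"

fun internal_heights :: "utree \<Rightarrow> real list" where
  "internal_heights (Leaf x) = []"
| "internal_heights (Node h l r) = h # internal_heights l @ internal_heights r"

fun heights_ok :: "utree \<Rightarrow> bool" where
  "heights_ok (Leaf x) = True"
| "heights_ok (Node h l r) = (ht l < h \<and> ht r < h \<and> heights_ok l \<and> heights_ok r)"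

fun subtrees :: "utree \<Rightarrow> utree set" where
  "subtrees (Leaf x) = {Leaf x}"
| "subtrees (Node h l r) = insert (Node h l r) (subtrees l \<union> subtrees r)"

text \<open>A species tree on X = {x_1,...,x_n} (leaf x_i labelled by i): leaves are
  distinct and exactly 1..n, interval lengths tau_i are positive (each vertex
  strictly above its children) and no two speciation events occur at the same
  time. The vector tau is determined by the (distinct, sorted) internal heights.\<close>
definition species_tree :: "nat \<Rightarrow> utree \<Rightarrow> bool" where
  "species_tree n S \<longleftrightarrow> distinct (leaves S) \<and> set (leaves S) = {1..n}
     \<and> heights_ok S \<and> distinct (internal_heights S)"

fun fp :: "utree \<Rightarrow> nat \<Rightarrow> real" where
  "fp (Leaf y) x = 0"
| "fp (Node h l r) x =
     (if x \<in> set (leaves l) then (h - ht l) / real (length (leaves l)) + fp l x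
      else if x \<in> set (leaves r) then (h - ht r) / real (length (leaves r)) + fp r x
      else 0)"

definition merge_pair :: "real \<Rightarrow> nat \<times> nat \<Rightarrow> utree list \<Rightarrow> utree list" where
  "merge_pair t p ls = Node t (ls ! fst p) (ls ! snd p)
      # [ls ! q. q \<leftarrow> [0..<length ls], q \<noteq> fst p \<and> q \<noteq> snd p]"

definition pairs :: "nat \<Rightarrow> (nat \<times> nat) set" where
  "pairs k = {(i, j). i < j \<and> j < k}"

text \<open>coal k a b cont ls: expectation of the continuation cont applied to the
  lineages leaving a population that spans the time interval from a to b
  (b = \<infinity> for the root population), entered at time a by the lineages ls
  (k = length ls is the recursion fuel). With k lineages, the first coalescence
  happens after an Exp(k choose 2) waiting time t, a uniformly random pair
  coalesces at time a+t; if no coalescence happens before b, the lineages leave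
  the population unchanged.\<close>
primrec coal :: "nat \<Rightarrow> real \<Rightarrow> ereal \<Rightarrow> (utree list \<Rightarrow> ennreal) \<Rightarrow> utree list \<Rightarrow> ennreal" where
  "coal 0 a b cont ls = cont ls"
| "coal (Suc k) a b cont ls =
     (if length ls \<le> 1 then cont ls
      else
        (let lam = real (length ls * (length ls - 1)) / 2;
             P = pairs (length ls)
         in (\<integral>\<^sup>+ t. indicator {t. 0 < t \<and> ereal (a + t) < b} t
                  * ennreal (lam * exp (- lam * t))
                  * (\<Sum>p\<in>P. ennreal (1 / real (card P)) * coal k (a + t) b cont (merge_pair (a + t) p ls))
               \<partial>lborel)
            + ennreal (if b = \<infinity> then 0 else exp (- lam * (real_of_ereal b - a))) * cont ls))"

text \<open>mscE S tp cont: expectation of cont applied to the gene lineages present at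
  time tp at the top of the branch above the species (sub)tree S, where the
  process inside S and along that branch follows the multispecies coalescent.
  Sister populations evolve independently (nested expectations).\<close>
primrec mscE :: "utree \<Rightarrow> ereal \<Rightarrow> (utree list \<Rightarrow> ennreal) \<Rightarrow> ennreal" where
  "mscE (Leaf x) tp cont = coal 1 0 tp cont [Leaf x]"
| "mscE (Node h l r) tp cont =
     mscE l (ereal h) (\<lambda>ls1. mscE r (ereal h) (\<lambda>ls2.
        coal (length (ls1 @ ls2)) h tp cont (ls1 @ ls2)))"

definition expected_fp :: "utree \<Rightarrow> nat \<Rightarrow> ennreal" where
  "expected_fp S x = mscE S \<infinity> (\<lambda>ls. ennreal (fp (hd ls) x))"

end

(*
  Both FP values collect the same contributions from
  the edges above the pendant subtree of height h; below it, the leaf m gets h from its own edge,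
  whereas a leaf i of the sibling subtree A gets at most (h - ht A) / |A| + ht A < h.

  Part (ii) is a coupling argument. At time h, exchange the lineage L that carries i with the
  lineage consisting of the leaf m; the multispecies coalescent only sees positions of lineages, so
  the exchanged history has the same law. Pathwise, the FP of m in the original gene tree is at
  least the FP of i in the exchanged one plus the gain h - fp_stem h L i, which is nonnegative.
  Hence E[FP(m)] >= E[FP(i)] + E[gain]. The gain is bounded below by a positive constant on an
  event of positive probability (i coalesces inside A early, and nothing else interferes), and
  E[FP(i)] is finite, so the inequality is strict.
*)
theory Submission
  imports Defs "HOL-Real_Asymp.Real_Asymp"
begin

section \<open>Fair Proportion on species trees\<close>

lemma leaves_not_Nil [simp]: "leaves T \<noteq> []"
  by (induction T) auto

lemma length_leaves_pos: "0 < length (leaves T)"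
  by (simp add: length_greater_0_conv)

lemma divide_length_leaves_le:
  assumes "0 \<le> d"
  shows "d / real (length (leaves T)) \<le> d"
proof -
  have "1 \<le> real (length (leaves T))" using length_leaves_pos[of T] by linarith
  then show ?thesis using assms by (simp add: mult_imp_div_pos_le mult_le_cancel_left1)
qed

lemma heights_ok_ht_nonneg: "heights_ok T \<Longrightarrow> 0 \<le> ht T"
  by (induction T) auto

lemma fp_nonneg: "heights_ok T \<Longrightarrow> 0 \<le> fp T x"
  by (induction T) auto

lemma fp_le_ht: "heights_ok T \<Longrightarrow> fp T x \<le> ht T"
proof (induction T)
  case (Node t l r)
  have "(t - ht l) / real (length (leaves l)) \<le> t - ht l"
       "(t - ht r) / real (length (leaves r)) \<le> t - ht r"
    using Node.prems by (auto intro!: divide_length_leaves_le)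
  then show ?case using Node heights_ok_ht_nonneg[of l] by auto
qed simp

lemma fp_Node_swap:
  "set (leaves l) \<inter> set (leaves r) = {} \<Longrightarrow> fp (Node t r l) x = fp (Node t l r) x"
  by auto

lemma subtrees_leaves: "T \<in> subtrees S \<Longrightarrow> set (leaves T) \<subseteq> set (leaves S)"
  by (induction S) auto

lemma subtrees_heights_ok: "T \<in> subtrees S \<Longrightarrow> heights_ok S \<Longrightarrow> heights_ok T"
  by (induction S) auto

lemma subtrees_distinct: "T \<in> subtrees S \<Longrightarrow> distinct (leaves S) \<Longrightarrow> distinct (leaves T)"
  by (induction S) auto

lemma subtrees_ht_le: "T \<in> subtrees S \<Longrightarrow> heights_ok S \<Longrightarrow> ht T \<le> ht S"
proof (induction S)
  case (Node t l r)
  then show ?case by (cases "T = Node t l r") (auto intro: order.trans less_imp_le)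
qed simp

text \<open>The FP contributions of the edges above a pendant subtree are shared by all its leaves.\<close>
lemma fp_diff_subtree:
  assumes "distinct (leaves S)" "T \<in> subtrees S" "x \<in> set (leaves T)" "y \<in> set (leaves T)"
  shows "fp S x - fp S y = fp T x - fp T y"
  using assms
proof (induction S)
  case (Node t l r)
  show ?case
  proof (cases "T = Node t l r")
    case False
    then consider "T \<in> subtrees l" | "T \<in> subtrees r" using Node.prems by auto
    then show ?thesis
    proof cases
      case 1
      then show ?thesis using subtrees_leaves[OF 1] Node by auto
    next
      case 2
      then have "x \<in> set (leaves r)" "y \<in> set (leaves r)"
        using subtrees_leaves[OF 2] Node.prems by auto
      moreover have "x \<notin> set (leaves l)" "y \<notin> set (leaves l)"
        using calculation Node.prems(1) by auto
      ultimately show ?thesis using Node 2 by auto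
    qed
  qed simp
qed simp

lemma fp_leaf_sibling_gt:
  assumes "heights_ok A" "ht A < h" "2 \<le> length (leaves A)"
    and "i \<in> set (leaves A)" "m \<notin> set (leaves A)"
  shows "fp (Node h A (Leaf m)) i < fp (Node h A (Leaf m)) m"
proof -
  have "(h - ht A) / real (length (leaves A)) \<le> (h - ht A) / 2"
    using assms by (intro divide_left_mono) auto
  moreover have "fp A i \<le> ht A" using fp_le_ht assms(1) .
  moreover have "(h - ht A) / 2 + ht A < h" using assms(2) by (simp add: field_simps)
  ultimately have "(h - ht A) / real (length (leaves A)) + fp A i < h" by linarith
  then show ?thesis using assms by auto
qed

section \<open>Lists of lineages\<close>

definition forest_leaves :: "utree list \<Rightarrow> nat list" where
  "forest_leaves ls = concat (map leaves ls)"

lemma forest_leaves_simps [simp]: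
  "forest_leaves [] = []"
  "forest_leaves (Y # ls) = leaves Y @ forest_leaves ls"
  "forest_leaves (ls @ ls') = forest_leaves ls @ forest_leaves ls'"
  by (auto simp: forest_leaves_def)

lemma mset_forest_leaves: "mset (forest_leaves ls) = (\<Sum>Y\<in>#mset ls. mset (leaves Y))"
  by (induction ls) auto

lemma mset_forest_leaves_eq: "mset ls = mset ls' \<Longrightarrow> mset (forest_leaves ls) = mset (forest_leaves ls')"
  by (simp add: mset_forest_leaves)

lemma length_le_forest_leaves: "length ls \<le> length (forest_leaves ls)"
proof (induction ls)
  case (Cons Y ls)
  then show ?case using length_leaves_pos[of Y] by (simp only: forest_leaves_simps length_append length_Cons)
qed simp

lemma leaves_subset_forest_leaves: "Y \<in> set ls \<Longrightarrow> set (leaves Y) \<subseteq> set (forest_leaves ls)"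
  by (auto simp: forest_leaves_def)

lemma in_forest_leaves_obtain:
  assumes "x \<in> set (forest_leaves ls)"
  obtains q where "q < length ls" "x \<in> set (leaves (ls ! q))"
proof -
  obtain Y where "Y \<in> set ls" "x \<in> set (leaves Y)" using assms by (auto simp: forest_leaves_def)
  then show ?thesis using that by (metis in_set_conv_nth)
qed

lemma forest_leaves_disjoint:
  assumes "distinct (forest_leaves ls)" "u < length ls" "v < length ls" "u \<noteq> v"
  shows "set (leaves (ls ! u)) \<inter> set (leaves (ls ! v)) = {}"
proof -
  have "[] \<notin> set (map leaves ls)" by (metis ex_map_conv leaves_not_Nil)
  then have "distinct (map leaves ls)"
    using assms(1) by (simp add: forest_leaves_def distinct_concat_iff removeAll_id)
  then have "leaves (ls ! u) \<noteq> leaves (ls ! v)"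
    using assms(2-4) by (metis length_map nth_eq_iff_index_eq nth_map)
  then show ?thesis
    using assms(1-3) by (simp add: forest_leaves_def distinct_concat_iff)
qed

lemma pairs_finite [simp]: "finite (pairs n)"
  by (rule finite_subset[of _ "{..<n} \<times> {..<n}"]) (auto simp: pairs_def)

lemma mem_pairsD: "p \<in> pairs n \<Longrightarrow> fst p < snd p \<and> snd p < n"
  by (auto simp: pairs_def)

lemma zero_one_in_pairs: "2 \<le> n \<Longrightarrow> (0, 1) \<in> pairs n"
  by (auto simp: pairs_def)

lemma card_pairs_le: "card (pairs n) \<le> n * n"
proof -
  have "card (pairs n) \<le> card ({..<n} \<times> {..<n})"
    by (rule card_mono) (auto simp: pairs_def)
  then show ?thesis by (simp add: card_cartesian_product)
qed

lemma merge_pair_eq: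
  "merge_pair t (u, v) ls =
     Node t (ls ! u) (ls ! v) # map (nth ls) (filter (\<lambda>q. q \<noteq> u \<and> q \<noteq> v) [0..<length ls])"
proof -
  have "concat (map (\<lambda>q. if P q then [f q] else []) xs) = map f (filter P xs)" for P f xs
    by (induction xs) auto
  then show ?thesis by (simp add: merge_pair_def)
qed

lemma mset_remaining_lineages:
  assumes "u < v" "v < length ls"
  shows "mset (map (nth ls) (filter (\<lambda>q. q \<noteq> u \<and> q \<noteq> v) [0..<length ls])) + {#ls ! u, ls ! v#}
         = mset ls"
proof -
  let ?P = "\<lambda>q. q \<noteq> u \<and> q \<noteq> v"
  let ?I = "[0..<length ls]"
  have "distinct (filter (\<lambda>q. \<not> ?P q) ?I)" by simp
  moreover have "set (filter (\<lambda>q. \<not> ?P q) ?I) = {u, v}" using assms by auto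
  ultimately have "mset (filter (\<lambda>q. \<not> ?P q) ?I) = mset_set {u, v}"
    by (metis mset_set_set)
  also have "mset_set {u, v} = {#u, v#}" using assms by simp
  finally have "mset ?I = mset (filter ?P ?I) + {#u, v#}"
    by (metis mset_filter multiset_partition)
  then have "image_mset (nth ls) (mset ?I) = image_mset (nth ls) (mset (filter ?P ?I)) + {#ls ! u, ls ! v#}"
    by simp
  then show ?thesis by (metis map_nth mset_map)
qed

lemma mset_merge_pair:
  assumes "p \<in> pairs (length ls)"
  shows "mset (merge_pair t p ls)
         = add_mset (Node t (ls ! fst p) (ls ! snd p)) (mset ls - {#ls ! fst p, ls ! snd p#})"
  and "{#ls ! fst p, ls ! snd p#} \<subseteq># mset ls"
proof -
  obtain u v where p: "p = (u, v)" by (cases p)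
  then have "u < v" "v < length ls" using mem_pairsD[OF assms] by auto
  note remaining = mset_remaining_lineages[OF this]
  then have "mset (map (nth ls) (filter (\<lambda>q. q \<noteq> u \<and> q \<noteq> v) [0..<length ls]))
      = mset ls - {#ls ! u, ls ! v#}"
    by (metis add_diff_cancel_right')
  then show "mset (merge_pair t p ls)
      = add_mset (Node t (ls ! fst p) (ls ! snd p)) (mset ls - {#ls ! fst p, ls ! snd p#})"
    by (simp add: p merge_pair_eq)
  show "{#ls ! fst p, ls ! snd p#} \<subseteq># mset ls"
    using remaining by (metis p fst_conv snd_conv mset_subset_eq_add_right)
qed

lemma length_merge_pair:
  assumes "p \<in> pairs (length ls)"
  shows "length (merge_pair t p ls) = length ls - 1"
proof -
  have "length (merge_pair t p ls) = Suc (size (mset ls - {#ls ! fst p, ls ! snd p#}))"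
    using mset_merge_pair(1)[OF assms] by (metis size_add_mset size_mset)
  then show ?thesis
    using mset_merge_pair(2)[OF assms] mem_pairsD[OF assms] by (simp add: size_Diff_submset) arith
qed

lemma set_merge_pairD:
  assumes "p \<in> pairs (length ls)" "Y \<in> set (merge_pair t p ls)"
  shows "Y = Node t (ls ! fst p) (ls ! snd p) \<or> Y \<in> set ls"
  using assms mset_merge_pair(1)[OF assms(1)]
  by (metis in_diffD set_mset_add_mset_insert insert_iff set_mset_mset)

lemma merged_in_merge_pair: "Node t (ls ! fst p) (ls ! snd p) \<in> set (merge_pair t p ls)"
  by (cases p) (simp add: merge_pair_eq)

lemma in_merge_pairI:
  assumes "p \<in> pairs (length ls)" "Y \<in> set ls" "Y \<noteq> ls ! fst p" "Y \<noteq> ls ! snd p"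
  shows "Y \<in> set (merge_pair t p ls)"
proof -
  have "Y \<in># mset ls - {#ls ! fst p, ls ! snd p#}"
    using assms(2-4) by (simp add: in_diff_count)
  then show ?thesis
    using mset_merge_pair(1)[OF assms(1), of t] by (metis insert_iff set_mset_add_mset_insert set_mset_mset)
qed

lemma mset_forest_leaves_merge_pair:
  assumes "p \<in> pairs (length ls)"
  shows "mset (forest_leaves (merge_pair t p ls)) = mset (forest_leaves ls)"
proof -
  let ?R = "mset ls - {#ls ! fst p, ls ! snd p#}"
  have e: "mset ls = ?R + {#ls ! fst p, ls ! snd p#}"
    using mset_merge_pair(2)[OF assms] by (metis subset_mset.diff_add)
  show ?thesis
    unfolding mset_forest_leaves mset_merge_pair(1)[OF assms] by (subst (2) e) (simp add: ac_simps)
qed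

definition lineages :: "nat multiset \<Rightarrow> real \<Rightarrow> utree list \<Rightarrow> bool" where
  "lineages M a ls \<longleftrightarrow> (\<forall>Y\<in>set ls. heights_ok Y \<and> ht Y \<le> a) \<and> mset (forest_leaves ls) = M"

lemma lineages_merge_pair:
  assumes "lineages M a ls" "0 < t" "p \<in> pairs (length ls)"
  shows "lineages M (a + t) (merge_pair (a + t) p ls)"
proof -
  have "ls ! fst p \<in> set ls" "ls ! snd p \<in> set ls" using mem_pairsD[OF assms(3)] by auto
  then show ?thesis
    using assms set_merge_pairD[OF assms(3)] mset_forest_leaves_merge_pair[OF assms(3)]
    by (fastforce simp: lineages_def)
qed

lemma lineages_mono: "lineages M a ls \<Longrightarrow> a \<le> a' \<Longrightarrow> lineages M a' ls"
  by (force simp: lineages_def)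

lemma lineages_length_le: "lineages M a ls \<Longrightarrow> length ls \<le> size M"
  using length_le_forest_leaves[of ls] by (auto simp: lineages_def dest: arg_cong[of _ _ size])

text \<open>The lists of lineages that mscE T tp passes to its continuation.\<close>
definition exit_lineages :: "utree \<Rightarrow> ereal \<Rightarrow> utree list \<Rightarrow> bool" where
  "exit_lineages T tp ls \<longleftrightarrow>
     (\<forall>Y\<in>set ls. heights_ok Y \<and> ereal (ht Y) < tp) \<and> mset (forest_leaves ls) = mset (leaves T)"

lemma exit_lineages_not_Nil: "exit_lineages T tp ls \<Longrightarrow> ls \<noteq> []"
  by (auto simp: exit_lineages_def)

lemma exit_lineagesI: "lineages (mset (leaves T)) a ls \<Longrightarrow> ereal a < tp \<Longrightarrow> exit_lineages T tp ls"
  by (auto simp: lineages_def exit_lineages_def intro: le_less_trans[of _ "ereal a"])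

lemma exit_lineages_lineages:
  "exit_lineages T (ereal tp) ls \<Longrightarrow> lineages (mset (leaves T)) tp ls"
  by (auto simp: lineages_def exit_lineages_def less_imp_le)

lemma exit_lineages_Node:
  assumes "exit_lineages l (ereal h) ls1" "exit_lineages r (ereal h) ls2"
  shows "lineages (mset (leaves (Node h l r))) h (ls1 @ ls2)"
  using assms by (auto simp: lineages_def exit_lineages_def less_imp_le)

section \<open>The coalescent expectation functionals\<close>

definition coal_rate :: "nat \<Rightarrow> real" where
  "coal_rate n = real (n * (n - 1)) / 2"

lemma coal_rate_nonneg: "0 \<le> coal_rate n"
  by (simp add: coal_rate_def)

lemma coal_rate_ge_1:
  assumes "2 \<le> n"
  shows "1 \<le> coal_rate n"
proof -
  have "2 * 1 \<le> n * (n - 1)" using assms by (intro mult_le_mono) auto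
  then have "real 2 \<le> real (n * (n - 1))" by (simp only: of_nat_le_iff mult_1_right)
  then show ?thesis unfolding coal_rate_def by linarith
qed

lemma coal_rate_le_square: "n \<le> N \<Longrightarrow> coal_rate n \<le> real (N * N)"
proof -
  assume "n \<le> N"
  then have "n * (n - 1) \<le> N * N" by (simp add: mult_le_mono)
  then have "real (n * (n - 1)) \<le> real (N * N)" by (simp only: of_nat_le_iff)
  then show ?thesis unfolding coal_rate_def by linarith
qed

lemma exp_coal_rate_ge:
  assumes "n \<le> N" "0 \<le> d"
  shows "exp (- real (N * N) * d) \<le> exp (- coal_rate n * d)"
  using coal_rate_le_square[OF assms(1)] assms(2) by (auto intro!: mult_right_mono)

lemma coal_length_le_1: "length ls \<le> 1 \<Longrightarrow> coal k a b c ls = c ls"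
  by (cases k) auto

lemma coal_Suc_unfold:
  assumes "2 \<le> length ls"
  shows "coal (Suc k) a b c ls =
   (\<integral>\<^sup>+ t. indicator {t. 0 < t \<and> ereal (a + t) < b} t
       * ennreal (coal_rate (length ls) * exp (- coal_rate (length ls) * t))
       * (\<Sum>p\<in>pairs (length ls). ennreal (1 / real (card (pairs (length ls))))
            * coal k (a + t) b c (merge_pair (a + t) p ls)) \<partial>lborel)
   + ennreal (if b = \<infinity> then 0 else exp (- coal_rate (length ls) * (real_of_ereal b - a))) * c ls"
  using assms by (simp add: Let_def coal_rate_def)

lemma mscE_Leaf: "mscE (Leaf x) tp c = c [Leaf x]"
  by (simp add: coal_length_le_1)

lemma sum_uniform_le:
  assumes "finite P" "P \<noteq> {}" "\<And>p. p \<in> P \<Longrightarrow> X p \<le> K"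
  shows "(\<Sum>p\<in>P. ennreal (1 / real (card P)) * X p) \<le> K"
proof -
  have "(\<Sum>p\<in>P. ennreal (1 / real (card P)) * X p) \<le> (\<Sum>p\<in>P. ennreal (1 / real (card P)) * K)"
    using assms by (intro sum_mono mult_left_mono) auto
  also have "\<dots> = of_nat (card P) * ennreal (1 / real (card P)) * K" by (simp add: mult.assoc)
  also have "of_nat (card P) * ennreal (1 / real (card P)) = 1"
    using assms by (simp add: ennreal_of_nat_eq_real_of_nat ennreal_mult'[symmetric] card_gt_0_iff)
  finally show ?thesis by simp
qed

lemma sum_uniform_ge:
  assumes "finite P" "P \<noteq> {}" "\<And>p. p \<in> P \<Longrightarrow> K \<le> X p"
  shows "K \<le> (\<Sum>p\<in>P. ennreal (1 / real (card P)) * X p)"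
proof -
  have "of_nat (card P) * ennreal (1 / real (card P)) = 1"
    using assms by (simp add: ennreal_of_nat_eq_real_of_nat ennreal_mult'[symmetric] card_gt_0_iff)
  moreover have "(\<Sum>p\<in>P. ennreal (1 / real (card P)) * K) = of_nat (card P) * ennreal (1 / real (card P)) * K"
    by (simp add: mult.assoc)
  ultimately have "K = (\<Sum>p\<in>P. ennreal (1 / real (card P)) * K)" by simp
  also have "\<dots> \<le> (\<Sum>p\<in>P. ennreal (1 / real (card P)) * X p)"
    using assms by (intro sum_mono mult_left_mono) auto
  finally show ?thesis .
qed

lemma coal_mono:
  assumes "\<And>ls. c2 ls \<le> c1 ls"
  shows "coal k a b c2 ls \<le> coal k a b c1 ls"
proof (induction k arbitrary: a ls)
  case (Suc k)
  show ?case
  proof (cases "length ls \<le> 1")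
    case False
    then have "2 \<le> length ls" by simp
    then show ?thesis unfolding coal_Suc_unfold[OF \<open>2 \<le> length ls\<close>]
      by (intro add_mono nn_integral_mono mult_left_mono sum_mono Suc assms) auto
  qed (use assms in \<open>simp add: coal_length_le_1\<close>)
qed (use assms in simp)

lemma mscE_mono:
  assumes "\<And>ls. c2 ls \<le> c1 ls"
  shows "mscE T tp c2 \<le> mscE T tp c1"
  using assms
proof (induction T arbitrary: tp c1 c2)
  case (Node h l r)
  show ?case unfolding mscE.simps by (intro Node.IH coal_mono Node.prems)
qed (simp add: mscE_Leaf)

text \<open>No measurability is needed, since the continuations of coal need not be measurable.\<close>
lemma nn_integral_superadditive:
  "integral\<^sup>N M f + integral\<^sup>N M g \<le> (\<integral>\<^sup>+ x. f x + g x \<partial>M)"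
proof -
  define A where "A = {s. simple_function M s \<and> s \<le> f}"
  define B where "B = {s. simple_function M s \<and> s \<le> g}"
  have ne: "A \<noteq> {}" "B \<noteq> {}"
    unfolding A_def B_def by (auto intro!: exI[of _ "\<lambda>_. 0"] simp: le_fun_def)
  have simple: "integral\<^sup>S M s + integral\<^sup>S M s' \<le> (\<integral>\<^sup>+ x. f x + g x \<partial>M)"
    if "s \<in> A" "s' \<in> B" for s s'
  proof -
    have s: "simple_function M s" "s \<le> f" and s': "simple_function M s'" "s' \<le> g"
      using that by (auto simp: A_def B_def)
    have "integral\<^sup>S M s + integral\<^sup>S M s' = integral\<^sup>N M (\<lambda>x. s x + s' x)"
      using s s' by (simp add: nn_integral_eq_simple_integral)
    also have "\<dots> \<le> (\<integral>\<^sup>+ x. f x + g x \<partial>M)"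
      using s s' by (intro nn_integral_mono add_mono) (auto simp: le_fun_def)
    finally show ?thesis .
  qed
  have "integral\<^sup>N M f + integral\<^sup>N M g = (SUP s'\<in>B. SUP s\<in>A. integral\<^sup>S M s + integral\<^sup>S M s')"
    unfolding nn_integral_def[of M f] nn_integral_def[of M g] A_def[symmetric] B_def[symmetric]
    by (simp add: ennreal_SUP_add_left[symmetric, OF ne(1)] ennreal_SUP_add_right[OF ne(2)])
  also have "\<dots> \<le> (\<integral>\<^sup>+ x. f x + g x \<partial>M)"
    using simple by (intro SUP_least) auto
  finally show ?thesis .
qed

lemma coal_superadditive:
  "coal k a b c1 ls + coal k a b c2 ls \<le> coal k a b (\<lambda>x. c1 x + c2 x) ls"
proof (induction k arbitrary: a ls)
  case (Suc k)
  show ?case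
  proof (cases "length ls \<le> 1")
    case False
    then have l2: "2 \<le> length ls" by simp
    let ?n = "length ls"
    let ?I = "\<lambda>t. indicator {t. 0 < t \<and> ereal (a + t) < b} t * ennreal (coal_rate ?n * exp (- coal_rate ?n * t))"
    let ?S = "\<lambda>c t. \<Sum>p\<in>pairs ?n. ennreal (1 / real (card (pairs ?n))) * coal k (a + t) b c (merge_pair (a + t) p ls)"
    let ?e = "ennreal (if b = \<infinity> then 0 else exp (- coal_rate ?n * (real_of_ereal b - a)))"
    have "?I t * ?S c1 t + ?I t * ?S c2 t \<le> ?I t * ?S (\<lambda>x. c1 x + c2 x) t" for t
    proof -
      have "?I t * ?S c1 t + ?I t * ?S c2 t
          = ?I t * (\<Sum>p\<in>pairs ?n. ennreal (1 / real (card (pairs ?n)))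
              * (coal k (a + t) b c1 (merge_pair (a + t) p ls) + coal k (a + t) b c2 (merge_pair (a + t) p ls)))"
        by (simp add: distrib_left sum.distrib)
      also have "\<dots> \<le> ?I t * ?S (\<lambda>x. c1 x + c2 x) t"
        by (intro mult_left_mono sum_mono Suc.IH) auto
      finally show ?thesis .
    qed
    then have integrals: "(\<integral>\<^sup>+ t. ?I t * ?S c1 t \<partial>lborel) + (\<integral>\<^sup>+ t. ?I t * ?S c2 t \<partial>lborel)
        \<le> (\<integral>\<^sup>+ t. ?I t * ?S (\<lambda>x. c1 x + c2 x) t \<partial>lborel)"
      by (intro order_trans[OF nn_integral_superadditive] nn_integral_mono)
    have "coal (Suc k) a b c1 ls + coal (Suc k) a b c2 ls
        = ((\<integral>\<^sup>+ t. ?I t * ?S c1 t \<partial>lborel) + (\<integral>\<^sup>+ t. ?I t * ?S c2 t \<partial>lborel))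
          + (?e * c1 ls + ?e * c2 ls)"
      unfolding coal_Suc_unfold[OF l2] by (simp only: ac_simps)
    also have "\<dots> \<le> (\<integral>\<^sup>+ t. ?I t * ?S (\<lambda>x. c1 x + c2 x) t \<partial>lborel) + ?e * (c1 ls + c2 ls)"
      using integrals by (intro add_mono) (simp_all add: distrib_left)
    also have "\<dots> = coal (Suc k) a b (\<lambda>x. c1 x + c2 x) ls"
      unfolding coal_Suc_unfold[OF l2] by simp
    finally show ?thesis .
  qed (simp add: coal_length_le_1)
qed simp

lemma mscE_superadditive:
  "mscE T tp c1 + mscE T tp c2 \<le> mscE T tp (\<lambda>x. c1 x + c2 x)"
proof (induction T arbitrary: tp c1 c2)
  case (Node h l r)
  let ?f = "\<lambda>c ls1. mscE r (ereal h) (\<lambda>ls2. coal (length (ls1 @ ls2)) h tp c (ls1 @ ls2))"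
  have "mscE l (ereal h) (?f c1) + mscE l (ereal h) (?f c2) \<le> mscE l (ereal h) (\<lambda>x. ?f c1 x + ?f c2 x)"
    by (rule Node.IH(1))
  also have "\<dots> \<le> mscE l (ereal h) (\<lambda>ls1. mscE r (ereal h) (\<lambda>ls2. coal (length (ls1 @ ls2)) h tp c1 (ls1 @ ls2)
       + coal (length (ls1 @ ls2)) h tp c2 (ls1 @ ls2)))"
    by (intro mscE_mono Node.IH(2))
  also have "\<dots> \<le> mscE l (ereal h) (?f (\<lambda>x. c1 x + c2 x))"
    by (intro mscE_mono coal_superadditive)
  finally show ?case by simp
qed (simp add: mscE_Leaf)

lemma coal_simulation_le:
  fixes R :: "real \<Rightarrow> utree list \<Rightarrow> utree list \<Rightarrow> bool"
  assumes "R a xs ys" "length xs \<le> k"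
    and len: "\<And>a xs ys. R a xs ys \<Longrightarrow> length ys = length xs"
    and step: "\<And>a xs ys t. R a xs ys \<Longrightarrow> 0 < t \<Longrightarrow> ereal (a + t) < b \<Longrightarrow> 2 \<le> length xs \<Longrightarrow>
       \<exists>\<sigma>. bij_betw \<sigma> (pairs (length xs)) (pairs (length xs)) \<and>
          (\<forall>p\<in>pairs (length xs). R (a + t) (merge_pair (a + t) p xs) (merge_pair (a + t) (\<sigma> p) ys))"
    and exit: "\<And>a xs ys. R a xs ys \<Longrightarrow> length xs \<le> 1 \<or> b \<noteq> \<infinity> \<Longrightarrow> c2 ys \<le> c1 xs"
  shows "coal k a b c2 ys \<le> coal k a b c1 xs"
  using assms(1,2)
proof (induction k arbitrary: a xs ys)
  case (Suc k)
  have ly: "length ys = length xs" using len Suc.prems by blast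
  show ?case
  proof (cases "length xs \<le> 1")
    case False
    then have l2: "2 \<le> length xs" by simp
    let ?n = "length xs"
    let ?w = "ennreal (1 / real (card (pairs ?n)))"
    have sums: "(\<Sum>p\<in>pairs ?n. ?w * coal k (a + t) b c2 (merge_pair (a + t) p ys))
        \<le> (\<Sum>p\<in>pairs ?n. ?w * coal k (a + t) b c1 (merge_pair (a + t) p xs))"
      if t: "0 < t" "ereal (a + t) < b" for t
    proof -
      obtain \<sigma> where \<sigma>: "bij_betw \<sigma> (pairs ?n) (pairs ?n)"
        "\<forall>p\<in>pairs ?n. R (a + t) (merge_pair (a + t) p xs) (merge_pair (a + t) (\<sigma> p) ys)"
        using step[OF Suc.prems(1) t l2] by blast
      have "(\<Sum>p\<in>pairs ?n. ?w * coal k (a + t) b c2 (merge_pair (a + t) p ys))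
          = (\<Sum>p\<in>pairs ?n. ?w * coal k (a + t) b c2 (merge_pair (a + t) (\<sigma> p) ys))"
        using sum.reindex_bij_betw[OF \<sigma>(1), of "\<lambda>p. ?w * coal k (a + t) b c2 (merge_pair (a + t) p ys)"]
        by simp
      also have "\<dots> \<le> (\<Sum>p\<in>pairs ?n. ?w * coal k (a + t) b c1 (merge_pair (a + t) p xs))"
        using Suc.IH \<sigma>(2) length_merge_pair Suc.prems(2)
        by (intro sum_mono mult_left_mono) (simp_all add: le_diff_conv)
      finally show ?thesis .
    qed
    show ?thesis
      unfolding coal_Suc_unfold[OF l2] coal_Suc_unfold[OF l2[folded ly]] ly
    proof (intro add_mono nn_integral_mono)
      fix t :: real
      show "indicator {t. 0 < t \<and> ereal (a + t) < b} t * ennreal (coal_rate ?n * exp (- coal_rate ?n * t)) *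
          (\<Sum>p\<in>pairs ?n. ?w * coal k (a + t) b c2 (merge_pair (a + t) p ys))
        \<le> indicator {t. 0 < t \<and> ereal (a + t) < b} t * ennreal (coal_rate ?n * exp (- coal_rate ?n * t)) *
          (\<Sum>p\<in>pairs ?n. ?w * coal k (a + t) b c1 (merge_pair (a + t) p xs))"
        using sums by (cases "0 < t \<and> ereal (a + t) < b") (auto intro!: mult_left_mono)
    qed (use exit[OF Suc.prems(1)] in \<open>auto intro!: mult_left_mono\<close>)
  qed (use exit[OF Suc.prems(1)] ly in \<open>simp add: coal_length_le_1\<close>)
qed (use exit len in simp)

lemma mscE_mono_exit:
  assumes "heights_ok T" "ereal (ht T) < tp" "\<And>ls. exit_lineages T tp ls \<Longrightarrow> c2 ls \<le> c1 ls"
  shows "mscE T tp c2 \<le> mscE T tp c1"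
  using assms
proof (induction T arbitrary: tp c1 c2)
  case (Leaf x)
  have "exit_lineages (Leaf x) tp [Leaf x]" using Leaf.prems(2) by (simp add: exit_lineages_def)
  then show ?case using Leaf.prems(3) by (simp add: mscE_Leaf)
next
  case (Node h l r)
  let ?M = "mset (leaves (Node h l r))"
  let ?R = "\<lambda>a xs ys. xs = ys \<and> lineages ?M a xs \<and> ereal a < tp"
  have "coal (length (ls1 @ ls2)) h tp c2 (ls1 @ ls2) \<le> coal (length (ls1 @ ls2)) h tp c1 (ls1 @ ls2)"
    if "exit_lineages l (ereal h) ls1" "exit_lineages r (ereal h) ls2" for ls1 ls2
  proof (rule coal_simulation_le[where R = ?R])
    show "?R h (ls1 @ ls2) (ls1 @ ls2)"
      using exit_lineages_Node[OF that] Node.prems(2) by simp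
  next
    fix a xs ys t assume "?R a xs ys" "0 < t" "ereal (a + t) < tp"
    then show "\<exists>\<sigma>. bij_betw \<sigma> (pairs (length xs)) (pairs (length xs)) \<and>
        (\<forall>p\<in>pairs (length xs). ?R (a + t) (merge_pair (a + t) p xs) (merge_pair (a + t) (\<sigma> p) ys))"
      using lineages_merge_pair by (intro exI[of _ id]) auto
  qed (use exit_lineagesI Node.prems(3) in auto)
  then show ?case unfolding mscE.simps
    using Node.prems(1) by (intro Node.IH) auto
qed

lemma nn_integral_exp_density_Icc:
  assumes "0 < l" "0 \<le> D"
  shows "(\<integral>\<^sup>+ t. ennreal (l * exp (- l * t)) * indicator {0..D} t \<partial>lborel) = ennreal (1 - exp (- l * D))"
proof -
  have "(\<integral>\<^sup>+ t. ennreal (l * exp (- l * t)) * indicator {0..D} t \<partial>lborel)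
     = ennreal ((\<lambda>t. - exp (- l * t)) D - (\<lambda>t. - exp (- l * t)) 0)"
    by (rule nn_integral_FTC_Icc) (use assms in \<open>auto intro!: derivative_eq_intros\<close>)
  then show ?thesis by simp
qed

lemma nn_integral_exp_density:
  assumes "0 < l"
  shows "(\<integral>\<^sup>+ t. ennreal (l * exp (- l * t)) * indicator {0..} t \<partial>lborel) = 1"
proof -
  let ?F = "\<lambda>t. - exp (- l * t)"
  have lim: "(?F \<longlongrightarrow> 0) at_top" using assms by real_asymp
  have "(\<integral>\<^sup>+ t. ennreal (l * exp (- l * t)) * indicator {0..} t \<partial>lborel) = ennreal (0 - ?F 0)"
    by (rule nn_integral_FTC_atLeast[OF _ _ _ lim])
      (use assms in \<open>auto intro!: derivative_eq_intros\<close>)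
  then show ?thesis by simp
qed

lemma nn_integral_exp_density_linear:
  assumes "0 < l" "0 \<le> \<alpha>"
  shows "(\<integral>\<^sup>+ t. ennreal (l * exp (- l * t) * (\<alpha> + t)) * indicator {0..} t \<partial>lborel) = ennreal (\<alpha> + 1 / l)"
proof -
  let ?F = "\<lambda>t. - (\<alpha> + t + 1 / l) * exp (- l * t)"
  have lim: "(?F \<longlongrightarrow> 0) at_top" using assms(1) by real_asymp
  have "(\<integral>\<^sup>+ t. ennreal (l * exp (- l * t) * (\<alpha> + t)) * indicator {0..} t \<partial>lborel) = ennreal (0 - ?F 0)"
    by (rule nn_integral_FTC_atLeast[OF _ _ _ lim])
      (use assms in \<open>auto intro!: derivative_eq_intros simp: field_simps\<close>)
  then show ?thesis by (simp add: add.commute)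
qed

lemma coal_le_const:
  assumes "I a xs"
    and step: "\<And>a xs t p. I a xs \<Longrightarrow> 0 < t \<Longrightarrow> a + t < \<beta> \<Longrightarrow> p \<in> pairs (length xs) \<Longrightarrow>
                 I (a + t) (merge_pair (a + t) p xs)"
    and below: "\<And>a xs. I a xs \<Longrightarrow> a \<le> \<beta>"
    and exit: "\<And>a xs. I a xs \<Longrightarrow> c xs \<le> K"
  shows "coal k a (ereal \<beta>) c xs \<le> K"
  using assms(1)
proof (induction k arbitrary: a xs)
  case (Suc k)
  show ?case
  proof (cases "length xs \<le> 1")
    case False
    then have l2: "2 \<le> length xs" by simp
    let ?n = "length xs"
    let ?l = "coal_rate ?n"
    let ?D = "\<beta> - a"
    let ?S = "\<lambda>t. \<Sum>p\<in>pairs ?n. ennreal (1 / real (card (pairs ?n))) * coal k (a + t) (ereal \<beta>) c (merge_pair (a + t) p xs)"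
    have lpos: "0 < ?l" using coal_rate_ge_1[OF l2] by simp
    have D: "0 \<le> ?D" using below[OF Suc.prems] by simp
    have "(\<integral>\<^sup>+ t. indicator {t. 0 < t \<and> ereal (a + t) < ereal \<beta>} t * ennreal (?l * exp (- ?l * t)) * ?S t \<partial>lborel)
       \<le> (\<integral>\<^sup>+ t. K * (ennreal (?l * exp (- ?l * t)) * indicator {0..?D} t) \<partial>lborel)"
    proof (intro nn_integral_mono)
      fix t
      show "indicator {t. 0 < t \<and> ereal (a + t) < ereal \<beta>} t * ennreal (?l * exp (- ?l * t)) * ?S t
        \<le> K * (ennreal (?l * exp (- ?l * t)) * indicator {0..?D} t)"
      proof (cases "0 < t \<and> a + t < \<beta>")
        case True
        then have "?S t \<le> K"
          using l2 zero_one_in_pairs by (intro sum_uniform_le Suc.IH step[OF Suc.prems]) auto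
        then have "ennreal (?l * exp (- ?l * t)) * ?S t \<le> ennreal (?l * exp (- ?l * t)) * K"
          by (rule mult_left_mono) simp
        then show ?thesis using True by (simp add: mult.commute)
      qed auto
    qed
    also have "\<dots> = K * ennreal (1 - exp (- ?l * ?D))"
      using nn_integral_exp_density_Icc[OF lpos D] by (subst nn_integral_cmult) auto
    finally have integral: "(\<integral>\<^sup>+ t. indicator {t. 0 < t \<and> ereal (a + t) < ereal \<beta>} t
        * ennreal (?l * exp (- ?l * t)) * ?S t \<partial>lborel) \<le> K * ennreal (1 - exp (- ?l * ?D))" .
    have "coal (Suc k) a (ereal \<beta>) c xs \<le> K * ennreal (1 - exp (- ?l * ?D)) + ennreal (exp (- ?l * ?D)) * K"
      unfolding coal_Suc_unfold[OF l2] using integral exit[OF Suc.prems]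
      by (auto intro!: add_mono mult_left_mono)
    also have "\<dots> = K * (ennreal (1 - exp (- ?l * ?D)) + ennreal (exp (- ?l * ?D)))"
      by (simp add: distrib_left mult.commute)
    also have "ennreal (1 - exp (- ?l * ?D)) + ennreal (exp (- ?l * ?D)) = 1"
      using lpos D by (subst ennreal_plus[symmetric]) auto
    finally show ?thesis by simp
  qed (use exit[OF Suc.prems] in \<open>simp add: coal_length_le_1\<close>)
qed (use exit in simp)

text \<open>Above the root the expected remaining time is at most the sum of the expected waiting
  times 1 / coal_rate k, which is below 2 per lineage.\<close>
lemma coal_le_root:
  assumes "I a xs" "length xs \<le> k"
    and step: "\<And>a xs t p. I a xs \<Longrightarrow> 0 < t \<Longrightarrow> p \<in> pairs (length xs) \<Longrightarrow>
                 I (a + t) (merge_pair (a + t) p xs)"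
    and nonneg: "\<And>a xs. I a xs \<Longrightarrow> 0 \<le> a"
    and exit: "\<And>a xs. I a xs \<Longrightarrow> length xs \<le> 1 \<Longrightarrow> c xs \<le> ennreal a"
  shows "coal k a \<infinity> c xs \<le> ennreal (a + 2 * real (length xs))"
  using assms(1,2)
proof (induction k arbitrary: a xs)
  case (Suc k)
  show ?case
  proof (cases "length xs \<le> 1")
    case False
    then have l2: "2 \<le> length xs" by simp
    let ?n = "length xs"
    let ?l = "coal_rate ?n"
    let ?\<alpha> = "a + 2 * real (?n - 1)"
    let ?S = "\<lambda>t. \<Sum>p\<in>pairs ?n. ennreal (1 / real (card (pairs ?n))) * coal k (a + t) \<infinity> c (merge_pair (a + t) p xs)"
    have lpos: "0 < ?l" using coal_rate_ge_1[OF l2] by simp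
    have a0: "0 \<le> a" using nonneg[OF Suc.prems(1)] .
    have "(\<integral>\<^sup>+ t. indicator {t. 0 < t \<and> ereal (a + t) < \<infinity>} t * ennreal (?l * exp (- ?l * t)) * ?S t \<partial>lborel)
       \<le> (\<integral>\<^sup>+ t. ennreal (?l * exp (- ?l * t) * (?\<alpha> + t)) * indicator {0..} t \<partial>lborel)"
    proof (intro nn_integral_mono)
      fix t
      show "indicator {t. 0 < t \<and> ereal (a + t) < \<infinity>} t * ennreal (?l * exp (- ?l * t)) * ?S t
        \<le> ennreal (?l * exp (- ?l * t) * (?\<alpha> + t)) * indicator {0..} t"
      proof (cases "0 < t")
        case True
        have "?S t \<le> ennreal (a + t + 2 * real (?n - 1))"
        proof (intro sum_uniform_le)
          fix p assume p: "p \<in> pairs ?n"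
          show "coal k (a + t) \<infinity> c (merge_pair (a + t) p xs) \<le> ennreal (a + t + 2 * real (?n - 1))"
            using Suc.IH[OF step[OF Suc.prems(1) True p]] length_merge_pair[OF p] Suc.prems(2) by simp
        qed (use l2 zero_one_in_pairs in auto)
        then have "ennreal (?l * exp (- ?l * t)) * ?S t \<le> ennreal (?l * exp (- ?l * t)) * ennreal (?\<alpha> + t)"
          by (intro mult_left_mono) (auto simp: ac_simps)
        also have "\<dots> = ennreal (?l * exp (- ?l * t) * (?\<alpha> + t))"
          using lpos a0 True by (subst ennreal_mult[symmetric]) auto
        finally show ?thesis using True by simp
      qed auto
    qed
    also have "\<dots> = ennreal (?\<alpha> + 1 / ?l)"
      using a0 by (intro nn_integral_exp_density_linear[OF lpos]) simp
    also have "\<dots> \<le> ennreal (a + 2 * real ?n)"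
    proof (rule ennreal_leI)
      have "1 / ?l \<le> 1" using coal_rate_ge_1[OF l2] by simp
      then show "?\<alpha> + 1 / ?l \<le> a + 2 * real ?n" using l2 by (simp add: of_nat_diff)
    qed
    finally show ?thesis unfolding coal_Suc_unfold[OF l2] by simp
  next
    case True
    have "c xs \<le> ennreal (a + 2 * real (length xs))"
      using exit[OF Suc.prems(1) True] by (rule order_trans) (simp add: ennreal_leI)
    then show ?thesis using True by (simp add: coal_length_le_1)
  qed
next
  case 0
  then show ?case using exit[OF 0(1)] by (simp add: ennreal_leI order_trans)
qed

lemma mscE_le_const:
  assumes "heights_ok T" "ht T < tp" "\<And>ls. exit_lineages T (ereal tp) ls \<Longrightarrow> c ls \<le> K"
  shows "mscE T (ereal tp) c \<le> K"
  using assms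
proof (induction T arbitrary: tp c)
  case (Leaf x)
  have "exit_lineages (Leaf x) tp [Leaf x]" using Leaf.prems(2) by (simp add: exit_lineages_def)
  then show ?case using Leaf.prems(3) by (simp add: mscE_Leaf)
next
  case (Node h l r)
  let ?M = "mset (leaves (Node h l r))"
  have "coal (length (ls1 @ ls2)) h (ereal tp) c (ls1 @ ls2) \<le> K"
    if "exit_lineages l (ereal h) ls1" "exit_lineages r (ereal h) ls2" for ls1 ls2
    by (rule coal_le_const[where I = "\<lambda>a xs. lineages ?M a xs \<and> a < tp"])
      (use exit_lineages_Node[OF that] Node.prems lineages_merge_pair exit_lineagesI in auto)
  then show ?case unfolding mscE.simps
    using Node.prems(1,2) by (intro Node.IH) auto
qed

lemma coal_ge_no_coalescence:
  assumes "a \<le> \<beta>"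
  shows "ennreal (exp (- coal_rate (length xs) * (\<beta> - a))) * c xs \<le> coal k a (ereal \<beta>) c xs"
proof (cases k)
  case 0
  have "exp (- coal_rate (length xs) * (\<beta> - a)) \<le> 1"
    using assms coal_rate_nonneg[of "length xs"] by auto
  then have "ennreal (exp (- coal_rate (length xs) * (\<beta> - a))) * c xs \<le> 1 * c xs"
    by (intro mult_right_mono) auto
  then show ?thesis using 0 by simp
next
  case (Suc k')
  show ?thesis
  proof (cases "length xs \<le> 1")
    case True
    then show ?thesis by (simp add: coal_length_le_1 coal_rate_def le_Suc_eq)
  next
    case False
    then have "2 \<le> length xs" by simp
    then show ?thesis unfolding Suc coal_Suc_unfold[OF \<open>2 \<le> length xs\<close>] by simp
  qed
qed

text \<open>
  \<mu> > 0 is a lower bound for the probability that the lineages handed to the continuation by the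
  expectation functional E satisfy P.\<close>
definition charges :: "((utree list \<Rightarrow> ennreal) \<Rightarrow> ennreal) \<Rightarrow> (utree list \<Rightarrow> bool) \<Rightarrow> real \<Rightarrow> bool" where
  "charges E P \<mu> \<longleftrightarrow> 0 < \<mu> \<and> (\<forall>c \<kappa>. (\<forall>ls. P ls \<longrightarrow> \<kappa> \<le> c ls) \<longrightarrow> ennreal \<mu> * \<kappa> \<le> E c)"

lemma chargesI:
  "0 < \<mu> \<Longrightarrow> (\<And>c \<kappa>. (\<And>ls. P ls \<Longrightarrow> \<kappa> \<le> c ls) \<Longrightarrow> ennreal \<mu> * \<kappa> \<le> E c) \<Longrightarrow> charges E P \<mu>"
  by (simp add: charges_def)

lemma chargesD:
  "charges E P \<mu> \<Longrightarrow> (\<And>ls. P ls \<Longrightarrow> \<kappa> \<le> c ls) \<Longrightarrow> ennreal \<mu> * \<kappa> \<le> E c"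
  by (simp add: charges_def)

lemma charges_pos: "charges E P \<mu> \<Longrightarrow> 0 < \<mu>"
  by (simp add: charges_def)

lemma charges_mono:
  assumes "charges E P \<mu>" "\<And>ls. P ls \<Longrightarrow> Q ls" "0 < \<mu>'" "\<mu>' \<le> \<mu>"
  shows "charges E Q \<mu>'"
proof (rule chargesI)
  fix c and \<kappa> :: ennreal assume "\<And>ls. Q ls \<Longrightarrow> \<kappa> \<le> c ls"
  then have "ennreal \<mu> * \<kappa> \<le> E c" using chargesD[OF assms(1)] assms(2) by blast
  moreover have "ennreal \<mu>' * \<kappa> \<le> ennreal \<mu> * \<kappa>" using assms(4) by (intro mult_right_mono ennreal_leI) auto
  ultimately show "ennreal \<mu>' * \<kappa> \<le> E c" by (rule order_trans[rotated])
qed (use assms(3) in simp)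

lemma charges_mscE_Leaf: "charges (mscE (Leaf x) tp) (\<lambda>ls. ls = [Leaf x]) 1"
  by (simp add: charges_def mscE_Leaf)

lemma charges_mscE_Node:
  assumes "charges (mscE l (ereal h)) Pl \<mu>l" "charges (mscE r (ereal h)) Pr \<mu>r"
    and "\<And>ls1 ls2. Pl ls1 \<Longrightarrow> Pr ls2 \<Longrightarrow> charges (\<lambda>c. coal (length (ls1 @ ls2)) h tp c (ls1 @ ls2)) Q \<nu>"
    and "0 < \<nu>"
  shows "charges (mscE (Node h l r) tp) Q (\<mu>l * (\<mu>r * \<nu>))"
proof (rule chargesI)
  show "0 < \<mu>l * (\<mu>r * \<nu>)" using assms by (simp add: charges_def)
  fix c and \<kappa> :: ennreal assume "\<And>ls. Q ls \<Longrightarrow> \<kappa> \<le> c ls"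
  then have "ennreal \<mu>l * (ennreal \<mu>r * (ennreal \<nu> * \<kappa>)) \<le> mscE (Node h l r) tp c"
    unfolding mscE.simps using assms by (intro chargesD[OF assms(1)] chargesD[OF assms(2)] chargesD)
  then show "ennreal (\<mu>l * (\<mu>r * \<nu>)) * \<kappa> \<le> mscE (Node h l r) tp c"
    using assms by (simp add: charges_def ennreal_mult mult.assoc)
qed

text \<open>The event that no coalescence happens before time \<beta>.\<close>
lemma charges_coal_no_coalescence:
  assumes "length xs \<le> N" "a \<le> \<beta>" "P xs"
  shows "charges (\<lambda>c. coal k a (ereal \<beta>) c xs) P (exp (- real (N * N) * (\<beta> - a)))"
proof (rule chargesI)
  fix c and \<kappa> :: ennreal assume "\<And>ls. P ls \<Longrightarrow> \<kappa> \<le> c ls"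
  then have "ennreal (exp (- real (N * N) * (\<beta> - a))) * \<kappa>
      \<le> ennreal (exp (- coal_rate (length xs) * (\<beta> - a))) * c xs"
    using assms exp_coal_rate_ge[OF assms(1), of "\<beta> - a"] by (intro mult_mono) (auto intro: ennreal_leI)
  also have "\<dots> \<le> coal k a (ereal \<beta>) c xs"
    using assms(2) by (rule coal_ge_no_coalescence)
  finally show "ennreal (exp (- real (N * N) * (\<beta> - a))) * \<kappa> \<le> coal k a (ereal \<beta>) c xs" .
qed simp

lemma charges_coal_Node_no_coalescence:
  assumes "exit_lineages l (ereal h) ls1" "exit_lineages r (ereal h) ls2" "h < tp" "P (ls1 @ ls2)"
  shows "charges (\<lambda>c. coal (length (ls1 @ ls2)) h (ereal tp) c (ls1 @ ls2))
           (\<lambda>ls. exit_lineages (Node h l r) (ereal tp) ls \<and> P ls)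
           (exp (- real (length (leaves (Node h l r)) * length (leaves (Node h l r))) * (tp - h)))"
proof (rule charges_coal_no_coalescence)
  have L: "lineages (mset (leaves (Node h l r))) h (ls1 @ ls2)" using exit_lineages_Node[OF assms(1,2)] .
  show "length (ls1 @ ls2) \<le> length (leaves (Node h l r))" using lineages_length_le[OF L] by simp
  show "exit_lineages (Node h l r) (ereal tp) (ls1 @ ls2) \<and> P (ls1 @ ls2)"
    using exit_lineagesI[OF L] assms(3,4) by simp
qed (use assms(3) in simp)

lemma mscE_charges_exit:
  assumes "heights_ok T" "ht T < tp"
  shows "\<exists>\<mu>. charges (mscE T (ereal tp)) (exit_lineages T (ereal tp)) \<mu>"
  using assms
proof (induction T arbitrary: tp)
  case (Leaf x)
  then have "charges (mscE (Leaf x) (ereal tp)) (exit_lineages (Leaf x) (ereal tp)) 1"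
    using charges_mono[OF charges_mscE_Leaf] by (force simp: exit_lineages_def)
  then show ?case ..
next
  case (Node h l r)
  have "heights_ok l" "ht l < h" "heights_ok r" "ht r < h" using Node.prems(1) by auto
  then obtain \<mu>l \<mu>r where l: "charges (mscE l (ereal h)) (exit_lineages l (ereal h)) \<mu>l"
    and r: "charges (mscE r (ereal h)) (exit_lineages r (ereal h)) \<mu>r"
    using Node.IH by blast
  have "charges (mscE (Node h l r) (ereal tp)) (\<lambda>ls. exit_lineages (Node h l r) (ereal tp) ls \<and> True)
      (\<mu>l * (\<mu>r * exp (- real (length (leaves (Node h l r)) * length (leaves (Node h l r))) * (tp - h))))"
    using Node.prems(2) by (intro charges_mscE_Node[OF l r] charges_coal_Node_no_coalescence) auto
  then show ?case by (simp only: simp_thms) blast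
qed

text \<open>Above the root, the lineages coalesce to a single one almost surely.\<close>
lemma coal_root_ge:
  assumes "I a xs" "length xs \<le> k"
    and step: "\<And>a xs t p. I a xs \<Longrightarrow> 0 < t \<Longrightarrow> p \<in> pairs (length xs) \<Longrightarrow>
                 I (a + t) (merge_pair (a + t) p xs)"
    and exit: "\<And>a xs. I a xs \<Longrightarrow> length xs \<le> 1 \<Longrightarrow> \<kappa> \<le> c xs"
  shows "\<kappa> \<le> coal k a \<infinity> c xs"
  using assms(1,2)
proof (induction k arbitrary: a xs)
  case (Suc k)
  show ?case
  proof (cases "length xs \<le> 1")
    case False
    then have l2: "2 \<le> length xs" by simp
    let ?n = "length xs"
    let ?l = "coal_rate ?n"
    let ?S = "\<lambda>t. \<Sum>p\<in>pairs ?n. ennreal (1 / real (card (pairs ?n))) * coal k (a + t) \<infinity> c (merge_pair (a + t) p xs)"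
    have lpos: "0 < ?l" using coal_rate_ge_1[OF l2] by simp
    have "\<kappa> = \<kappa> * (\<integral>\<^sup>+ t. ennreal (?l * exp (- ?l * t)) * indicator {0..} t \<partial>lborel)"
      by (simp only: nn_integral_exp_density[OF lpos] mult_1_right)
    also have "\<dots> = (\<integral>\<^sup>+ t. \<kappa> * (ennreal (?l * exp (- ?l * t)) * indicator {0..} t) \<partial>lborel)"
      by (subst nn_integral_cmult) auto
    also have "\<dots> \<le> (\<integral>\<^sup>+ t. indicator {t. 0 < t \<and> ereal (a + t) < \<infinity>} t * ennreal (?l * exp (- ?l * t)) * ?S t \<partial>lborel)"
    proof (rule nn_integral_mono_AE)
      have "\<kappa> \<le> ?S t" if "0 < t" for t
      proof (intro sum_uniform_ge)
        fix p assume p: "p \<in> pairs ?n"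
        show "\<kappa> \<le> coal k (a + t) \<infinity> c (merge_pair (a + t) p xs)"
          using Suc.IH[OF step[OF Suc.prems(1) that p]] length_merge_pair[OF p] Suc.prems(2) by simp
      qed (use l2 zero_one_in_pairs in auto)
      then have pointwise: "\<kappa> * (ennreal (?l * exp (- ?l * t)) * indicator {0..} t)
          \<le> indicator {t. 0 < t \<and> ereal (a + t) < \<infinity>} t * ennreal (?l * exp (- ?l * t)) * ?S t"
        if "t \<noteq> 0" for t
        using that by (cases "0 < t") (auto simp: mult.commute[of \<kappa>] intro: mult_left_mono)
      show "AE t in lborel. \<kappa> * (ennreal (?l * exp (- ?l * t)) * indicator {0..} t)
          \<le> indicator {t. 0 < t \<and> ereal (a + t) < \<infinity>} t * ennreal (?l * exp (- ?l * t)) * ?S t"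
        using AE_lborel_singleton[of 0] by (rule AE_mp) (intro AE_I2 impI pointwise)
    qed
    finally show ?thesis unfolding coal_Suc_unfold[OF l2] by (rule order_trans) simp
  qed (use exit[OF Suc.prems(1)] in \<open>simp add: coal_length_le_1\<close>)
qed (use exit in simp)

lemma sum_uniform_ge_member:
  assumes "finite P" "p0 \<in> P" "real (card P) \<le> K"
  shows "ennreal (1 / K) * X p0 \<le> (\<Sum>p\<in>P. ennreal (1 / real (card P)) * X p)"
proof -
  have "0 < card P" using assms(1,2) card_gt_0_iff by fastforce
  then have "ennreal (1 / K) \<le> ennreal (1 / real (card P))"
    using assms(3) by (intro ennreal_leI) (simp add: frac_le)
  then have "ennreal (1 / K) * X p0 \<le> ennreal (1 / real (card P)) * X p0" by (rule mult_right_mono) simp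
  also have "\<dots> \<le> (\<Sum>p\<in>P. ennreal (1 / real (card P)) * X p)"
    using assms(1,2) by (intro member_le_sum) auto
  finally show ?thesis .
qed

text \<open>The event that the pair p0 coalesces during the time window from a + \<alpha>1 to a + \<alpha>2 and no
  other coalescence happens before \<beta>.\<close>
lemma charges_coal_event:
  assumes l2: "2 \<le> length xs" and lN: "length xs \<le> N" and p0: "p0 \<in> pairs (length xs)"
    and \<alpha>: "0 < \<alpha>1" "\<alpha>1 < \<alpha>2" "a + \<alpha>2 < \<beta>"
    and event: "\<And>t. \<alpha>1 \<le> t \<Longrightarrow> t \<le> \<alpha>2 \<Longrightarrow> P (merge_pair (a + t) p0 xs)"
  shows "charges (\<lambda>c. coal (Suc k) a (ereal \<beta>) c xs) P
           ((\<alpha>2 - \<alpha>1) * (exp (- real (N * N) * (\<beta> - a)) / real (N * N) * exp (- real (N * N) * (\<beta> - a))))"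
proof (rule chargesI)
  let ?n = "length xs"
  let ?l = "coal_rate ?n"
  let ?E = "exp (- real (N * N) * (\<beta> - a))"
  let ?w = "ennreal (1 / real (card (pairs ?n)))"
  have NN: "0 < real (N * N)" using l2 lN by simp
  then show "0 < (\<alpha>2 - \<alpha>1) * (?E / real (N * N) * ?E)" using \<alpha> by simp
  fix c and \<kappa> :: ennreal assume hyp: "\<And>ls. P ls \<Longrightarrow> \<kappa> \<le> c ls"
  let ?C = "ennreal (?E / real (N * N) * ?E) * \<kappa>"
  have "?C \<le> indicator {t. 0 < t \<and> ereal (a + t) < ereal \<beta>} t * ennreal (?l * exp (- ?l * t)) *
        (\<Sum>p\<in>pairs ?n. ?w * coal k (a + t) (ereal \<beta>) c (merge_pair (a + t) p xs))"
    if t: "\<alpha>1 \<le> t" "t \<le> \<alpha>2" for t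
  proof -
    have "length (merge_pair (a + t) p0 xs) \<le> N" using length_merge_pair[OF p0] lN by simp
    then have "charges (\<lambda>c. coal k (a + t) (ereal \<beta>) c (merge_pair (a + t) p0 xs)) P ?E"
      using \<alpha> t event[OF t] NN
      by (intro charges_mono[OF charges_coal_no_coalescence]) (auto simp: mult_left_mono)
    then have stay: "ennreal ?E * \<kappa> \<le> coal k (a + t) (ereal \<beta>) c (merge_pair (a + t) p0 xs)"
      using hyp by (rule chargesD)
    have "real (card (pairs ?n)) \<le> real (N * N)"
      using card_pairs_le[of ?n] lN by (metis le_trans mult_le_mono of_nat_le_iff)
    then have "ennreal (1 / real (N * N)) * coal k (a + t) (ereal \<beta>) c (merge_pair (a + t) p0 xs)
        \<le> (\<Sum>p\<in>pairs ?n. ?w * coal k (a + t) (ereal \<beta>) c (merge_pair (a + t) p xs))"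
      by (rule sum_uniform_ge_member[OF pairs_finite p0])
    then have sum: "ennreal (1 / real (N * N)) * (ennreal ?E * \<kappa>)
        \<le> (\<Sum>p\<in>pairs ?n. ?w * coal k (a + t) (ereal \<beta>) c (merge_pair (a + t) p xs))"
      using stay by (meson mult_left_mono order_trans zero_le)
    have "?l * t \<le> real (N * N) * (\<beta> - a)"
      using coal_rate_le_square[OF lN] t \<alpha> coal_rate_nonneg by (intro mult_mono) auto
    then have "?E \<le> exp (- ?l * t)" by simp
    also have "\<dots> \<le> ?l * exp (- ?l * t)" using coal_rate_ge_1[OF l2] by simp
    finally have density: "?E \<le> ?l * exp (- ?l * t)" .
    have "?C = ennreal ?E * (ennreal (1 / real (N * N)) * (ennreal ?E * \<kappa>))"
      using NN by (simp add: ennreal_mult[symmetric] mult_ac)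
    also have "\<dots> \<le> ennreal (?l * exp (- ?l * t)) *
        (\<Sum>p\<in>pairs ?n. ?w * coal k (a + t) (ereal \<beta>) c (merge_pair (a + t) p xs))"
      using density sum by (intro mult_mono) (auto intro: ennreal_leI)
    finally show ?thesis using t \<alpha> by (simp add: mult.assoc)
  qed
  then have "(\<integral>\<^sup>+ t. ?C * indicator {\<alpha>1..\<alpha>2} t \<partial>lborel) \<le>
      (\<integral>\<^sup>+ t. indicator {t. 0 < t \<and> ereal (a + t) < ereal \<beta>} t * ennreal (?l * exp (- ?l * t)) *
          (\<Sum>p\<in>pairs ?n. ?w * coal k (a + t) (ereal \<beta>) c (merge_pair (a + t) p xs)) \<partial>lborel)"
    by (intro nn_integral_mono) (auto simp: indicator_def)
  moreover have "(\<integral>\<^sup>+ t. ?C * indicator {\<alpha>1..\<alpha>2} t \<partial>lborel) = ?C * ennreal (\<alpha>2 - \<alpha>1)"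
    using \<alpha> by (subst nn_integral_cmult_indicator) auto
  moreover have "?C * ennreal (\<alpha>2 - \<alpha>1) = ennreal ((\<alpha>2 - \<alpha>1) * (?E / real (N * N) * ?E)) * \<kappa>"
    using \<alpha> NN by (subst ennreal_mult) (auto simp: mult_ac)
  ultimately have "ennreal ((\<alpha>2 - \<alpha>1) * (?E / real (N * N) * ?E)) * \<kappa> \<le>
      (\<integral>\<^sup>+ t. indicator {t. 0 < t \<and> ereal (a + t) < ereal \<beta>} t * ennreal (?l * exp (- ?l * t)) *
          (\<Sum>p\<in>pairs ?n. ?w * coal k (a + t) (ereal \<beta>) c (merge_pair (a + t) p xs)) \<partial>lborel)"
    by simp
  then show "ennreal ((\<alpha>2 - \<alpha>1) * (?E / real (N * N) * ?E)) * \<kappa> \<le> coal (Suc k) a (ereal \<beta>) c xs"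
    unfolding coal_Suc_unfold[OF l2] by (rule order_trans) simp
qed

section \<open>The exchange coupling\<close>

fun lineage_at :: "real \<Rightarrow> nat \<Rightarrow> utree \<Rightarrow> utree" where
  "lineage_at h i (Leaf x) = Leaf x"
| "lineage_at h i (Node t l r) =
     (if t < h then Node t l r else if i \<in> set (leaves l) then lineage_at h i l else lineage_at h i r)"

lemma lineage_at_below: "ht L < h \<Longrightarrow> lineage_at h i L = L"
  by (cases L) auto

lemma heights_ok_lineage_at: "heights_ok T \<Longrightarrow> heights_ok (lineage_at h i T)"
  by (induction T) auto

lemma ht_lineage_at_le: "0 \<le> h \<Longrightarrow> ht (lineage_at h i T) \<le> h"
  by (induction T) auto

text \<open>The FP index of x in T when T hangs from an edge reaching up to time t.\<close>
definition fp_stem :: "real \<Rightarrow> utree \<Rightarrow> nat \<Rightarrow> real" where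
  "fp_stem t T x = (t - ht T) / real (length (leaves T)) + fp T x"

lemma fp_stem_le:
  assumes "heights_ok T" "ht T \<le> t"
  shows "fp_stem t T x \<le> t"
proof -
  have "(t - ht T) / real (length (leaves T)) \<le> t - ht T"
    using assms(2) by (intro divide_length_leaves_le) simp
  moreover have "fp T x \<le> ht T" using fp_le_ht[OF assms(1)] .
  ultimately show ?thesis unfolding fp_stem_def by linarith
qed

text \<open>
  A single leaf contributes fp_stem h (Leaf m) m = h below time h; the gain of i is what it
  contributes less than that, through its lineage at time h.\<close>
definition gain :: "real \<Rightarrow> nat \<Rightarrow> utree \<Rightarrow> real" where
  "gain h i T = h - fp_stem h (lineage_at h i T) i"

lemma gain_nonneg: "heights_ok T \<Longrightarrow> 0 \<le> h \<Longrightarrow> 0 \<le> gain h i T"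
  using fp_stem_le[OF heights_ok_lineage_at ht_lineage_at_le] by (simp add: gain_def)

lemma gain_cherry:
  assumes "i \<notin> set (leaves V)" "\<tau> < h"
  shows "(h - \<tau>) / 2 \<le> gain h i (Node \<tau> (Leaf i) V)"
    and "(h - \<tau>) / 2 \<le> gain h i (Node \<tau> V (Leaf i))"
proof -
  have "2 \<le> 1 + real (length (leaves V))" using length_leaves_pos[of V] by linarith
  then have "(h - \<tau>) / (1 + real (length (leaves V))) \<le> (h - \<tau>) / 2"
    using assms by (intro divide_left_mono) auto
  then have "(h - \<tau>) / 2 \<le> h - (h - \<tau>) / (1 + real (length (leaves V))) - \<tau>"
    by (simp add: field_simps)
  then show "(h - \<tau>) / 2 \<le> gain h i (Node \<tau> (Leaf i) V)"
    and "(h - \<tau>) / 2 \<le> gain h i (Node \<tau> V (Leaf i))"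
    using assms by (simp_all add: gain_def fp_stem_def add.commute)
qed

text \<open>
  Let L be the lineage of i at time h, the height of the pendant
  subtree. In the coupled history the lineages L and Leaf m are exchanged at time h, and from then
  on both histories coalesce the same positions. The relation below links a lineage T of the
  original history with the corresponding lineage T' of the coupled one; c = |L| - 1 as long as
  the lineages of m and i have not merged, and 0 afterwards.\<close>
definition swap_related :: "real \<Rightarrow> nat \<Rightarrow> nat \<Rightarrow> nat \<Rightarrow> utree \<Rightarrow> utree \<Rightarrow> bool" where
  "swap_related h m i c T T' \<longleftrightarrow>
     (if m \<in> set (leaves T) then
        i \<in> set (leaves T') \<and> length (leaves T') = length (leaves T) + c \<and> (i \<in> set (leaves T) \<longrightarrow> c = 0)
        \<and> (T = Leaf m \<or> (ht T' = ht T \<and> h \<le> ht T))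
        \<and> (\<forall>t. max h (max (ht T) (ht T')) \<le> t \<longrightarrow> fp_stem t T' i + gain h i T' \<le> fp_stem t T m)
      else if i \<in> set (leaves T) then
        m \<in> set (leaves T') \<and> i \<notin> set (leaves T') \<and> length (leaves T) = length (leaves T') + c
      else m \<notin> set (leaves T') \<and> i \<notin> set (leaves T') \<and> length (leaves T') = length (leaves T))"

lemma swap_related_refl: "m \<notin> set (leaves T) \<Longrightarrow> i \<notin> set (leaves T) \<Longrightarrow> swap_related h m i c T T"
  by (simp add: swap_related_def)

lemma swap_related_counter_irrelevant:
  "m \<notin> set (leaves T) \<Longrightarrow> i \<notin> set (leaves T) \<Longrightarrow> swap_related h m i c T T' = swap_related h m i c' T T'"
  by (simp add: swap_related_def)

lemma swap_related_commute_left: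
  assumes "set (leaves X1) \<inter> set (leaves X2) = {}"
  shows "swap_related h m i c (Node t X2 X1) T' = swap_related h m i c (Node t X1 X2) T'"
proof -
  have e: "set (leaves (Node t X2 X1)) = set (leaves (Node t X1 X2))"
    "length (leaves (Node t X2 X1)) = length (leaves (Node t X1 X2))"
    "ht (Node t X2 X1) = ht (Node t X1 X2)" "(Node t X2 X1 = Leaf m) = (Node t X1 X2 = Leaf m)"
    by auto
  show ?thesis unfolding swap_related_def fp_stem_def e fp_Node_swap[OF assms] ..
qed

lemma swap_related_commute_right:
  assumes "set (leaves Y1) \<inter> set (leaves Y2) = {}" "h \<le> t"
  shows "swap_related h m i c T (Node t Y2 Y1) = swap_related h m i c T (Node t Y1 Y2)"
proof -
  have e: "set (leaves (Node t Y2 Y1)) = set (leaves (Node t Y1 Y2))"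
    "length (leaves (Node t Y2 Y1)) = length (leaves (Node t Y1 Y2))"
    "ht (Node t Y2 Y1) = ht (Node t Y1 Y2)"
    by auto
  show ?thesis
  proof (cases "i \<in> set (leaves (Node t Y1 Y2))")
    case True
    then have lin: "lineage_at h i (Node t Y2 Y1) = lineage_at h i (Node t Y1 Y2)"
      using assms by auto
    show ?thesis unfolding swap_related_def gain_def fp_stem_def e lin fp_Node_swap[OF assms(1)] ..
  next
    case False
    then show ?thesis unfolding swap_related_def e by simp
  qed
qed

lemma swap_related_Node_with_m:
  assumes rel: "swap_related h m i c X1 Y1" and mX1: "m \<in> set (leaves X1)" and mX2: "m \<notin> set (leaves X2)"
    and iY1: "i \<in> set (leaves Y1)"
    and ha: "h \<le> a" "a < t" and hts: "ht X1 \<le> a" "ht Y1 \<le> a"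
    and len: "length (leaves Y1) + length (leaves Y2) = length (leaves X1) + length (leaves X2) + c'"
    and c': "i \<in> set (leaves X1) \<or> i \<in> set (leaves X2) \<longrightarrow> c' = 0"
  shows "swap_related h m i c' (Node t X1 X2) (Node t Y1 Y2)"
proof -
  let ?N = "Node t X1 X2" and ?N' = "Node t Y1 Y2"
  have below: "\<And>s. max h (max (ht X1) (ht Y1)) \<le> s \<Longrightarrow> fp_stem s Y1 i + gain h i Y1 \<le> fp_stem s X1 m"
    using rel mX1 unfolding swap_related_def by auto
  have gain: "gain h i ?N' = gain h i Y1" using iY1 ha by (simp add: gain_def)
  have "fp_stem s ?N' i + gain h i ?N' \<le> fp_stem s ?N m" if "t \<le> s" for s
  proof -
    have "0 < real (length (leaves ?N))" "0 < real (length (leaves ?N'))"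
      by (simp_all only: of_nat_0_less_iff length_leaves_pos)
    moreover have "real (length (leaves ?N)) \<le> real (length (leaves ?N'))" using len by simp
    ultimately have "(s - t) / real (length (leaves ?N')) \<le> (s - t) / real (length (leaves ?N))"
      using that by (intro divide_left_mono mult_pos_pos) auto
    moreover have "fp_stem t Y1 i + gain h i Y1 \<le> fp_stem t X1 m" using below ha hts by auto
    ultimately show ?thesis using iY1 mX1 gain by (simp add: fp_stem_def)
  qed
  then show ?thesis
    unfolding swap_related_def using mX1 iY1 len c' ha by auto
qed

lemma swap_related_Node_m_left:
  assumes rel1: "swap_related h m i c X1 Y1" and rel2: "swap_related h m i c X2 Y2"
    and m1: "m \<in> set (leaves X1)" and dX: "set (leaves X1) \<inter> set (leaves X2) = {}"
    and ha: "h \<le> a" "a < t" and hts: "ht X1 \<le> a" "ht Y1 \<le> a"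
  obtains c' where "swap_related h m i c' (Node t X1 X2) (Node t Y1 Y2)"
    and "c' \<noteq> c \<Longrightarrow> i \<in> set (leaves (Node t X1 X2))"
proof -
  have m2: "m \<notin> set (leaves X2)" using m1 dX by auto
  have iY1: "i \<in> set (leaves Y1)" and lY1: "length (leaves Y1) = length (leaves X1) + c"
    and c0: "i \<in> set (leaves X1) \<longrightarrow> c = 0"
    using rel1 m1 unfolding swap_related_def by auto
  show ?thesis
  proof (cases "i \<in> set (leaves X2)")
    case True
    then have "length (leaves X2) = length (leaves Y2) + c"
      using rel2 m2 unfolding swap_related_def by auto
    then have "swap_related h m i 0 (Node t X1 X2) (Node t Y1 Y2)"
      using lY1 by (intro swap_related_Node_with_m[OF rel1 m1 m2 iY1 ha hts]) auto
    then show ?thesis using that True by auto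
  next
    case False
    then have "length (leaves Y2) = length (leaves X2)"
      using rel2 m2 unfolding swap_related_def by auto
    then have "swap_related h m i c (Node t X1 X2) (Node t Y1 Y2)"
      using lY1 c0 False by (intro swap_related_Node_with_m[OF rel1 m1 m2 iY1 ha hts]) auto
    then show ?thesis using that by blast
  qed
qed

lemma swap_related_Node:
  assumes rel1: "swap_related h m i c X1 Y1" and rel2: "swap_related h m i c X2 Y2"
    and dX: "set (leaves X1) \<inter> set (leaves X2) = {}" and dY: "set (leaves Y1) \<inter> set (leaves Y2) = {}"
    and ha: "h \<le> a" "a < t" and hts: "ht X1 \<le> a" "ht Y1 \<le> a" "ht X2 \<le> a" "ht Y2 \<le> a"
  obtains c' where "swap_related h m i c' (Node t X1 X2) (Node t Y1 Y2)"
    and "c' \<noteq> c \<Longrightarrow> m \<in> set (leaves (Node t X1 X2)) \<and> i \<in> set (leaves (Node t X1 X2))"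
proof -
  have commute: "swap_related h m i c' (Node t X2 X1) (Node t Y2 Y1) = swap_related h m i c' (Node t X1 X2) (Node t Y1 Y2)"
    for c' using swap_related_commute_left[OF dX] swap_related_commute_right[OF dY] ha by simp
  consider "m \<in> set (leaves X1)" | "m \<in> set (leaves X2)" | "m \<notin> set (leaves (Node t X1 X2))"
    by auto
  then show ?thesis
  proof cases
    case 1
    then show ?thesis using swap_related_Node_m_left[OF rel1 rel2 1 dX ha hts(1,2)] that by auto
  next
    case 2
    have "set (leaves X2) \<inter> set (leaves X1) = {}" using dX by auto
    from swap_related_Node_m_left[OF rel2 rel1 2 this ha hts(3,4)] obtain c' where
      "swap_related h m i c' (Node t X1 X2) (Node t Y1 Y2)" "c' \<noteq> c \<Longrightarrow> i \<in> set (leaves (Node t X1 X2))"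
      by (metis commute Un_iff leaves.simps(2) set_append)
    then show ?thesis using that 2 by auto
  next
    case 3
    then have "swap_related h m i c (Node t X1 X2) (Node t Y1 Y2)"
      using rel1 rel2 dX unfolding swap_related_def by (auto split: if_splits)
    then show ?thesis using that by blast
  qed
qed

lemma permutation_pairs_bij:
  assumes "\<pi> permutes {..<n}"
  obtains \<sigma> where "bij_betw \<sigma> (pairs n) (pairs n)"
    and "\<And>u v. (u, v) \<in> pairs n \<Longrightarrow> \<sigma> (u, v) = (\<pi> u, \<pi> v) \<or> \<sigma> (u, v) = (\<pi> v, \<pi> u)"
proof
  let ?\<sigma> = "\<lambda>p. (min (\<pi> (fst p)) (\<pi> (snd p)), max (\<pi> (fst p)) (\<pi> (snd p)))"
  have inj: "inj \<pi>" using permutes_inj[OF assms] .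
  have lt: "\<pi> j < n" if "j < n" for j using permutes_in_image[OF assms] that by auto
  have into: "?\<sigma> p \<in> pairs n" if p: "p \<in> pairs n" for p
  proof -
    have "fst p \<noteq> snd p" "fst p < n" "snd p < n" using mem_pairsD[OF p] by auto
    then have "\<pi> (fst p) \<noteq> \<pi> (snd p)" "\<pi> (fst p) < n" "\<pi> (snd p) < n"
      using inj lt by (auto dest: injD)
    then show ?thesis by (auto simp: pairs_def min_def max_def)
  qed
  have inj_\<sigma>: "inj_on ?\<sigma> (pairs n)"
  proof
    fix p q assume p: "p \<in> pairs n" and q: "q \<in> pairs n" and e: "?\<sigma> p = ?\<sigma> q"
    have minmax: "min x y = min x' y' \<Longrightarrow> max x y = max x' y' \<Longrightarrow> {x, y} = {x', y'}" for x y x' y' :: nat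
      by (auto simp: min_def max_def split: if_splits)
    from e have "min (\<pi> (fst p)) (\<pi> (snd p)) = min (\<pi> (fst q)) (\<pi> (snd q))"
      "max (\<pi> (fst p)) (\<pi> (snd p)) = max (\<pi> (fst q)) (\<pi> (snd q))" by simp_all
    then have "{\<pi> (fst p), \<pi> (snd p)} = {\<pi> (fst q), \<pi> (snd q)}" by (rule minmax)
    then have "\<pi> ` {fst p, snd p} = \<pi> ` {fst q, snd q}" by simp
    then have "{fst p, snd p} = {fst q, snd q}" by (simp only: inj_image_eq_iff[OF inj])
    then show "p = q" using mem_pairsD[OF p] mem_pairsD[OF q]
      by (cases p, cases q) (auto simp: doubleton_eq_iff)
  qed
  have "?\<sigma> ` pairs n \<subseteq> pairs n" using into by blast
  then have "?\<sigma> ` pairs n = pairs n" using endo_inj_surj[OF pairs_finite _ inj_\<sigma>] by blast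
  then show "bij_betw ?\<sigma> (pairs n) (pairs n)" using inj_\<sigma> by (simp add: bij_betw_def)
  show "?\<sigma> (u, v) = (\<pi> u, \<pi> v) \<or> ?\<sigma> (u, v) = (\<pi> v, \<pi> u)" for u v
    by (auto simp: min_def max_def)
qed

lemma list_all2_swap_related_merge_pair:
  assumes rel: "list_all2 (swap_related h m i c) xs ys" and p: "(u, v) \<in> pairs (length xs)"
    and dx: "distinct (forest_leaves xs)" and dy: "distinct (forest_leaves ys)"
    and hts: "\<forall>Y\<in>set xs. ht Y \<le> a" "\<forall>Y\<in>set ys. ht Y \<le> a" and ha: "h \<le> a" "a < \<tau>"
  obtains c' where "list_all2 (swap_related h m i c') (merge_pair \<tau> (u, v) xs) (merge_pair \<tau> (u, v) ys)"
proof -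
  have uv: "u < v" "v < length xs" and ly: "length ys = length xs"
    using mem_pairsD[OF p] list_all2_lengthD[OF rel] by auto
  have rel_at: "swap_related h m i c (xs ! q) (ys ! q)" if "q < length xs" for q
    using rel that by (simp add: list_all2_conv_all_nth)
  have dX: "set (leaves (xs ! u)) \<inter> set (leaves (xs ! v)) = {}"
    and dY: "set (leaves (ys ! u)) \<inter> set (leaves (ys ! v)) = {}"
    using forest_leaves_disjoint[OF dx] forest_leaves_disjoint[OF dy] uv ly by auto
  have "ht (xs ! u) \<le> a" "ht (ys ! u) \<le> a" "ht (xs ! v) \<le> a" "ht (ys ! v) \<le> a"
    using hts uv ly by auto
  from swap_related_Node[OF rel_at rel_at dX dY ha this] uv
  obtain c' where c': "swap_related h m i c' (Node \<tau> (xs ! u) (xs ! v)) (Node \<tau> (ys ! u) (ys ! v))"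
    and changed: "c' \<noteq> c \<Longrightarrow> m \<in> set (leaves (Node \<tau> (xs ! u) (xs ! v))) \<and> i \<in> set (leaves (Node \<tau> (xs ! u) (xs ! v)))"
    by (metis less_trans)
  let ?R = "filter (\<lambda>q. q \<noteq> u \<and> q \<noteq> v) [0..<length xs]"
  have "swap_related h m i c' (xs ! q) (ys ! q)" if q: "q \<in> set ?R" for q
  proof (cases "c' = c")
    case False
    have "set (leaves (xs ! q)) \<inter> set (leaves (xs ! u)) = {}" "set (leaves (xs ! q)) \<inter> set (leaves (xs ! v)) = {}"
      using forest_leaves_disjoint[OF dx] q uv by auto
    then have "m \<notin> set (leaves (xs ! q))" "i \<notin> set (leaves (xs ! q))" using changed[OF False] by auto
    moreover have "q < length xs" using q by simp
    ultimately show ?thesis using rel_at swap_related_counter_irrelevant by blast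
  qed (use rel_at q in auto)
  then have "list_all2 (swap_related h m i c') (map (nth xs) ?R) (map (nth ys) ?R)"
    by (auto simp: list_all2_conv_all_nth dest: nth_mem)
  then show ?thesis using that c' ly by (simp add: merge_pair_eq)
qed

definition coupled :: "real \<Rightarrow> nat \<Rightarrow> nat \<Rightarrow> nat multiset \<Rightarrow> real \<Rightarrow> utree list \<Rightarrow> utree list \<Rightarrow> bool" where
  "coupled h m i M a xs ys \<longleftrightarrow> lineages M a xs \<and> lineages M a ys \<and> 0 \<le> h \<and> h \<le> a
     \<and> distinct (forest_leaves xs) \<and> m \<in> set (forest_leaves xs) \<and> i \<in> set (forest_leaves xs) \<and> m \<noteq> i
     \<and> (\<exists>c ys'. mset ys' = mset ys \<and> list_all2 (swap_related h m i c) xs ys')"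

lemma coupled_length: "coupled h m i M a xs ys \<Longrightarrow> length ys = length xs"
  unfolding coupled_def by (metis list_all2_lengthD mset_eq_length)

lemma coupled_mono: "coupled h m i M a xs ys \<Longrightarrow> a \<le> a' \<Longrightarrow> coupled h m i M a' xs ys"
  by (auto simp: coupled_def intro: lineages_mono)

lemma swap_related_merge_pair_permute:
  assumes rel: "list_all2 (swap_related h m i c) xs ys'"
    and \<pi>: "\<pi> permutes {..<length ys}" "permute_list \<pi> ys = ys'"
    and p: "(u, v) \<in> pairs (length xs)" "(u', v') \<in> pairs (length xs)"
    and flip: "(u' = \<pi> u \<and> v' = \<pi> v) \<or> (u' = \<pi> v \<and> v' = \<pi> u)"
    and dx: "distinct (forest_leaves xs)" and dy: "distinct (forest_leaves ys')"
    and hts: "\<forall>Y\<in>set xs. ht Y \<le> a" "\<forall>Y\<in>set ys'. ht Y \<le> a" and ha: "h \<le> a" "a < \<tau>"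
  obtains c' ys'' where "mset ys'' = mset (merge_pair \<tau> (u', v') ys)"
    and "list_all2 (swap_related h m i c') (merge_pair \<tau> (u, v) xs) ys''"
proof -
  have uvn: "u < v" "v < length xs" using mem_pairsD[OF p(1)] by auto
  have ly': "length ys' = length xs" using list_all2_lengthD[OF rel] by simp
  then have ly: "length ys = length xs" using \<pi>(2) by auto
  have ynth: "ys' ! j = ys ! \<pi> j" if "j < length xs" for j
    using permute_list_nth[OF \<pi>(1)] that ly \<pi>(2) by metis
  obtain c' where rel': "list_all2 (swap_related h m i c') (merge_pair \<tau> (u, v) xs) (merge_pair \<tau> (u, v) ys')"
    by (rule list_all2_swap_related_merge_pair[OF rel p(1) dx dy hts ha])
  let ?rest = "map (nth ys') (filter (\<lambda>q. q \<noteq> u \<and> q \<noteq> v) [0..<length xs])"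
  define ys'' where "ys'' = Node \<tau> (ys ! u') (ys ! v') # ?rest"
  have "swap_related h m i c' (Node \<tau> (xs ! u) (xs ! v)) (Node \<tau> (ys ! u') (ys ! v'))"
    using flip
  proof
    assume "u' = \<pi> v \<and> v' = \<pi> u"
    moreover have "set (leaves (ys' ! u)) \<inter> set (leaves (ys' ! v)) = {}"
      using forest_leaves_disjoint[OF dy] uvn ly' by auto
    ultimately show ?thesis
      using rel' swap_related_commute_right[of "ys' ! u" "ys' ! v" h \<tau>] uvn ynth ha
      by (simp add: merge_pair_eq ly')
  qed (use rel' uvn ynth ly' in \<open>simp add: merge_pair_eq\<close>)
  then have "list_all2 (swap_related h m i c') (merge_pair \<tau> (u, v) xs) ys''"
    using rel' by (simp add: ys''_def merge_pair_eq ly')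
  moreover have "mset ys'' = mset (merge_pair \<tau> (u', v') ys)"
  proof -
    have p': "(u', v') \<in> pairs (length ys)" using p(2) ly by simp
    have "mset ?rest = mset ys' - {#ys' ! u, ys' ! v#}"
      using mset_remaining_lineages[of u v ys'] uvn ly' by (metis add_diff_cancel_right')
    also have "{#ys' ! u, ys' ! v#} = {#ys ! u', ys ! v'#}"
      using flip ynth uvn by (auto simp: add_mset_commute)
    finally show ?thesis
      unfolding ys''_def mset_merge_pair(1)[OF p'] using mset_permute_list[OF \<pi>(1)] \<pi>(2) by simp
  qed
  ultimately show ?thesis using that by blast
qed

lemma coupled_merge_pair:
  assumes R: "coupled h m i M a xs ys" and t: "0 < t" and l2: "2 \<le> length xs"
  obtains \<sigma> where "bij_betw \<sigma> (pairs (length xs)) (pairs (length xs))"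
    and "\<And>p. p \<in> pairs (length xs) \<Longrightarrow>
           coupled h m i M (a + t) (merge_pair (a + t) p xs) (merge_pair (a + t) (\<sigma> p) ys)"
proof -
  let ?n = "length xs"
  let ?\<tau> = "a + t"
  from R obtain c ys' where ys': "mset ys' = mset ys" "list_all2 (swap_related h m i c) xs ys'"
    unfolding coupled_def by blast
  have Rx: "lineages M a xs" "lineages M a ys" "0 \<le> h" "h \<le> a" "distinct (forest_leaves xs)" "m \<noteq> i"
    "m \<in> set (forest_leaves xs)" "i \<in> set (forest_leaves xs)"
    using R unfolding coupled_def by auto
  have ly: "length ys = ?n" using mset_eq_length[OF ys'(1)] list_all2_lengthD[OF ys'(2)] by simp
  obtain \<pi> where \<pi>: "\<pi> permutes {..<length ys}" "permute_list \<pi> ys = ys'"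
    using mset_eq_permutation[OF ys'(1)] by blast
  have dys': "distinct (forest_leaves ys')"
    using mset_forest_leaves_eq[OF ys'(1)] Rx(1,2,5) by (metis lineages_def mset_eq_imp_distinct_iff)
  have htx: "\<forall>Y\<in>set xs. ht Y \<le> a" using Rx(1) by (simp add: lineages_def)
  have hty: "\<forall>Y\<in>set ys'. ht Y \<le> a" using Rx(2) ys'(1) by (simp add: lineages_def flip: set_mset_mset)
  obtain \<sigma> where \<sigma>: "bij_betw \<sigma> (pairs ?n) (pairs ?n)"
    "\<And>u v. (u, v) \<in> pairs ?n \<Longrightarrow> \<sigma> (u, v) = (\<pi> u, \<pi> v) \<or> \<sigma> (u, v) = (\<pi> v, \<pi> u)"
    using permutation_pairs_bij \<pi>(1) ly by metis
  have "coupled h m i M ?\<tau> (merge_pair ?\<tau> p xs) (merge_pair ?\<tau> (\<sigma> p) ys)" if p: "p \<in> pairs ?n" for p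
  proof -
    obtain u v u' v' where uv: "p = (u, v)" "\<sigma> p = (u', v')" by (cases p, cases "\<sigma> p")
    have "(u' = \<pi> u \<and> v' = \<pi> v) \<or> (u' = \<pi> v \<and> v' = \<pi> u)" using \<sigma>(2) p uv by fastforce
    moreover have "a < ?\<tau>" using t by simp
    ultimately obtain c' ys'' where "mset ys'' = mset (merge_pair ?\<tau> (\<sigma> p) ys)"
      "list_all2 (swap_related h m i c') (merge_pair ?\<tau> p xs) ys''"
      using swap_related_merge_pair_permute[OF ys'(2) \<pi> p[unfolded uv(1)] _ _ Rx(5) dys' htx hty Rx(4)]
        bij_betwE[OF \<sigma>(1)] p uv by metis
    moreover have "lineages M ?\<tau> (merge_pair ?\<tau> p xs)" using lineages_merge_pair[OF Rx(1) t p] .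
    moreover have "lineages M ?\<tau> (merge_pair ?\<tau> (\<sigma> p) ys)"
      using lineages_merge_pair[OF Rx(2) t] bij_betwE[OF \<sigma>(1)] p ly by simp
    moreover have mx: "mset (forest_leaves (merge_pair ?\<tau> p xs)) = mset (forest_leaves xs)"
      by (rule mset_forest_leaves_merge_pair[OF p])
    then have "distinct (forest_leaves (merge_pair ?\<tau> p xs))"
      using Rx(5) by (metis mset_eq_imp_distinct_iff)
    moreover have "set (forest_leaves (merge_pair ?\<tau> p xs)) = set (forest_leaves xs)"
      using mx by (metis set_mset_mset)
    ultimately show ?thesis using Rx(3,4,6,7,8) t unfolding coupled_def by auto
  qed
  then show ?thesis using that \<sigma>(1) by blast
qed

lemma coupled_append:
  assumes R: "coupled h m i M a xs ys" and zs: "lineages (mset (forest_leaves zs)) a zs"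
    and mz: "m \<notin> set (forest_leaves zs)" and iz: "i \<notin> set (forest_leaves zs)"
    and d: "distinct (forest_leaves (xs @ zs))"
  shows "coupled h m i (M + mset (forest_leaves zs)) a (xs @ zs) (ys @ zs)"
    and "coupled h m i (mset (forest_leaves zs) + M) a (zs @ xs) (zs @ ys)"
proof -
  from R obtain c ys' where ys': "mset ys' = mset ys" "list_all2 (swap_related h m i c) xs ys'"
    unfolding coupled_def by blast
  have "list_all2 (swap_related h m i c) zs zs"
    using mz iz
    by (auto simp: list_all2_conv_all_nth intro!: swap_related_refl dest: leaves_subset_forest_leaves[OF nth_mem])
  then have "list_all2 (swap_related h m i c) (xs @ zs) (ys' @ zs)"
    "list_all2 (swap_related h m i c) (zs @ xs) (zs @ ys')"
    using ys'(2) by (simp_all add: list_all2_appendI)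
  moreover have "distinct (forest_leaves (zs @ xs))" using d by auto
  ultimately show "coupled h m i (M + mset (forest_leaves zs)) a (xs @ zs) (ys @ zs)"
    and "coupled h m i (mset (forest_leaves zs) + M) a (zs @ xs) (zs @ ys)"
    using R zs d ys'(1) unfolding coupled_def lineages_def by (auto intro!: exI[of _ c])
qed

lemma coupled_init:
  assumes hs: "\<forall>Y\<in>set xs. heights_ok Y \<and> ht Y < h" and d: "distinct (forest_leaves xs)"
    and p: "p < length xs" "xs ! p = Leaf m" and i: "i \<in> set (forest_leaves xs)" and mi: "m \<noteq> i"
  shows "coupled h m i (mset (forest_leaves xs)) h xs xs"
proof -
  obtain q where q: "q < length xs" "i \<in> set (leaves (xs ! q))" using i by (rule in_forest_leaves_obtain)
  let ?L = "xs ! q"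
  have pq: "p \<noteq> q" using p q mi by auto
  have hL: "heights_ok ?L" "ht ?L < h" using hs q by auto
  have h0: "0 \<le> h" using hs p by (metis ht.simps(1) nth_mem less_imp_le)
  have mL: "m \<notin> set (leaves ?L)" using forest_leaves_disjoint[OF d p(1) q(1) pq] p by auto
  define c where "c = length (leaves ?L) - 1"
  have lc: "length (leaves ?L) = 1 + c" using length_leaves_pos[of ?L] unfolding c_def by linarith
  have "fp_stem t ?L i + gain h i ?L \<le> fp_stem t (Leaf m) m" if "h \<le> t" for t
  proof -
    have "fp_stem t ?L i + gain h i ?L = (t - h) / real (length (leaves ?L)) + h"
      using lineage_at_below[OF hL(2)] by (simp add: gain_def fp_stem_def field_simps)
    also have "(t - h) / real (length (leaves ?L)) \<le> t - h" using that by (intro divide_length_leaves_le) simp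
    finally show ?thesis by (simp add: fp_stem_def)
  qed
  then have target: "swap_related h m i c (Leaf m) ?L"
    unfolding swap_related_def using q(2) lc hL(2) mi by auto
  have source: "swap_related h m i c ?L (Leaf m)"
    unfolding swap_related_def using q(2) lc mi mL by auto
  define ys' where "ys' = xs[p := ?L, q := Leaf m]"
  have "mset ys' = mset xs" unfolding ys'_def using mset_swap[OF q(1) p(1)] p(2) by simp
  moreover have "list_all2 (swap_related h m i c) xs ys'"
  proof (rule list_all2_all_nthI)
    fix j assume j: "j < length xs"
    consider "j = q" | "j = p" | "j \<noteq> p" "j \<noteq> q" by blast
    then show "swap_related h m i c (xs ! j) (ys' ! j)"
    proof cases
      case 3
      then have "set (leaves (xs ! j)) \<inter> set (leaves (Leaf m)) = {}" "set (leaves (xs ! j)) \<inter> set (leaves ?L) = {}"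
        using forest_leaves_disjoint[OF d j] p q by (metis, metis)
      then show ?thesis using 3 q(2) by (auto simp: ys'_def intro!: swap_related_refl)
    qed (use source target p q pq in \<open>simp_all add: ys'_def\<close>)
  qed (simp add: ys'_def)
  moreover have "m \<in> set (forest_leaves xs)"
    using leaves_subset_forest_leaves[OF nth_mem[OF p(1)]] p(2) by auto
  ultimately show ?thesis
    unfolding coupled_def lineages_def using hs d i mi h0 by (auto intro: less_imp_le)
qed

lemma coupled_exit:
  assumes R: "coupled h m i M a xs ys" and l: "length xs \<le> 1"
  shows "ennreal (fp (hd ys) i) + ennreal (gain h i (hd ys)) \<le> ennreal (fp (hd xs) m)"
proof -
  from R obtain c ys' where ys': "mset ys' = mset ys" "list_all2 (swap_related h m i c) xs ys'"
    unfolding coupled_def by blast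
  have mx: "m \<in> set (forest_leaves xs)" "i \<in> set (forest_leaves xs)" "m \<noteq> i" "0 \<le> h"
    and hy: "\<forall>Y\<in>set ys. heights_ok Y"
    using R unfolding coupled_def lineages_def by auto
  obtain T where xs: "xs = [T]" using l mx(1) by (cases xs) auto
  obtain T' where ys'T: "ys' = [T']" using ys'(2) xs by (cases ys') auto
  have ys: "ys = [T']" using ys'(1) ys'T by (metis mset_single_iff mset.simps(1) mset.simps(2))
  have mT: "m \<in> set (leaves T)" "i \<in> set (leaves T)" using mx xs by auto
  then have "T \<noteq> Leaf m" using mx(3) by auto
  then have "ht T' = ht T" "h \<le> ht T"
    and below: "fp_stem (ht T) T' i + gain h i T' \<le> fp_stem (ht T) T m"
    using ys'(2) xs ys'T mT unfolding swap_related_def by auto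
  then have "fp T' i + gain h i T' \<le> fp T m" by (simp add: fp_stem_def)
  moreover have "0 \<le> fp T' i" "0 \<le> gain h i T'"
    using hy ys mx(4) by (auto intro: fp_nonneg gain_nonneg)
  ultimately show ?thesis using xs ys by (simp add: ennreal_plus[symmetric] ennreal_leI del: ennreal_plus)
qed

lemma coal_coupled_le:
  assumes R: "coupled h m i M a xs ys" and tp: "ereal a < tp"
    and exit: "\<And>a xs ys. coupled h m i M a xs ys \<Longrightarrow> ereal a < tp \<Longrightarrow> length xs \<le> 1 \<or> tp \<noteq> \<infinity> \<Longrightarrow>
                 c2 ys \<le> c1 xs"
  shows "coal (length ys) a tp c2 ys \<le> coal (length xs) a tp c1 xs"
  unfolding coupled_length[OF R]
proof (rule coal_simulation_le[where R = "\<lambda>a xs ys. coupled h m i M a xs ys \<and> ereal a < tp"])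
  fix a xs ys t assume R': "coupled h m i M a xs ys \<and> ereal a < tp"
    and t: "0 < t" "ereal (a + t) < tp" and l2: "2 \<le> length xs"
  obtain \<sigma> where "bij_betw \<sigma> (pairs (length xs)) (pairs (length xs))"
    "\<And>p. p \<in> pairs (length xs) \<Longrightarrow> coupled h m i M (a + t) (merge_pair (a + t) p xs) (merge_pair (a + t) (\<sigma> p) ys)"
    using coupled_merge_pair[OF conjunct1[OF R'] t(1) l2] by blast
  then show "\<exists>\<sigma>. bij_betw \<sigma> (pairs (length xs)) (pairs (length xs)) \<and>
      (\<forall>p\<in>pairs (length xs). coupled h m i M (a + t) (merge_pair (a + t) p xs) (merge_pair (a + t) (\<sigma> p) ys)
         \<and> ereal (a + t) < tp)"
    using t by blast
qed (use R tp exit coupled_length in auto)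

lemma coal_exchange_le:
  assumes "\<forall>Y\<in>set xs. heights_ok Y \<and> ht Y < h" "distinct (forest_leaves xs)"
    and "p < length xs" "xs ! p = Leaf m" "i \<in> set (forest_leaves xs)" "m \<noteq> i" "ereal h < tp"
    and "\<And>a xs' ys'. coupled h m i (mset (forest_leaves xs)) a xs' ys' \<Longrightarrow> ereal a < tp \<Longrightarrow>
           length xs' \<le> 1 \<or> tp \<noteq> \<infinity> \<Longrightarrow> c2 ys' \<le> c1 xs'"
  shows "coal (length xs) h tp c2 xs \<le> coal (length xs) h tp c1 xs"
  using coal_coupled_le[OF coupled_init[OF assms(1-6)] assms(7,8)] by simp

lemma mscE_pendant_coupled_le:
  assumes A: "heights_ok A" "ht A < h" and T: "T = Node h A (Leaf m) \<or> T = Node h (Leaf m) A"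
    and d: "distinct (leaves T)" and iA: "i \<in> set (leaves A)" and mi: "m \<noteq> i" and tp: "ereal h < tp"
    and exit: "\<And>a xs ys. coupled h m i (mset (leaves T)) a xs ys \<Longrightarrow> ereal a < tp \<Longrightarrow>
                 length xs \<le> 1 \<or> tp \<noteq> \<infinity> \<Longrightarrow> c2 ys \<le> c1 xs"
  shows "mscE T tp c2 \<le> mscE T tp c1"
proof -
  have h0: "0 < h" using A heights_ok_ht_nonneg[of A] by simp
  have A': "ereal (ht A) < ereal h" using A by simp
  have swap: "coal (length xs) h tp c2 xs \<le> coal (length xs) h tp c1 xs"
    if "exit_lineages A (ereal h) ls" "xs = ls @ [Leaf m] \<or> xs = Leaf m # ls" for ls xs
  proof -
    have "Leaf m \<in> set xs" using that(2) by auto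
    then obtain p where p: "p < length xs" "xs ! p = Leaf m" by (metis in_set_conv_nth)
    have M: "mset (forest_leaves xs) = mset (leaves T)" using that T by (auto simp: exit_lineages_def)
    show ?thesis
    proof (rule coal_exchange_le[OF _ _ p])
      show "distinct (forest_leaves xs)" using M d by (metis mset_eq_imp_distinct_iff)
      show "i \<in> set (forest_leaves xs)" using M iA T by (metis set_mset_mset Un_iff leaves.simps(2) set_append)
      show "\<forall>Y\<in>set xs. heights_ok Y \<and> ht Y < h" using that h0 by (auto simp: exit_lineages_def)
    qed (use M exit tp mi in auto)
  qed
  from T show ?thesis
    by (elim disjE; simp only: mscE.simps(2) mscE_Leaf)
      (intro mscE_mono_exit[OF A(1) A'], rule swap, assumption, simp)+
qed

lemma coal_coupled_append_le:
  assumes R: "coupled h m i M a xs ys" and ab: "a \<le> b"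
    and zs: "exit_lineages Z (ereal b) zs" "m \<notin> set (leaves Z)" "i \<notin> set (leaves Z)"
    and T: "M + mset (leaves Z) = mset (leaves T)" "distinct (leaves T)" and tp: "ereal b < tp"
    and exit: "\<And>a xs ys. coupled h m i (mset (leaves T)) a xs ys \<Longrightarrow> ereal a < tp \<Longrightarrow>
                 length xs \<le> 1 \<or> tp \<noteq> \<infinity> \<Longrightarrow> c2 ys \<le> c1 xs"
  shows "coal (length (ys @ zs)) b tp c2 (ys @ zs) \<le> coal (length (xs @ zs)) b tp c1 (xs @ zs)"
    and "coal (length (zs @ ys)) b tp c2 (zs @ ys) \<le> coal (length (zs @ xs)) b tp c1 (zs @ xs)"
proof -
  have Rb: "coupled h m i M b xs ys" using coupled_mono[OF R ab] .
  have MZ: "mset (forest_leaves zs) = mset (leaves Z)" using zs(1) by (simp add: exit_lineages_def)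
  then have z: "lineages (mset (forest_leaves zs)) b zs" using exit_lineages_lineages[OF zs(1)] by simp
  have "set (forest_leaves zs) = set (leaves Z)" using MZ by (metis set_mset_mset)
  then have mz: "m \<notin> set (forest_leaves zs)" "i \<notin> set (forest_leaves zs)" using zs(2,3) by auto
  have "mset (forest_leaves (xs @ zs)) = mset (leaves T)" using Rb MZ T(1) by (simp add: coupled_def lineages_def)
  then have d: "distinct (forest_leaves (xs @ zs))" using T(2) by (metis mset_eq_imp_distinct_iff)
  show "coal (length (ys @ zs)) b tp c2 (ys @ zs) \<le> coal (length (xs @ zs)) b tp c1 (xs @ zs)"
    using coupled_append(1)[OF Rb z mz d] MZ T(1) by (intro coal_coupled_le[OF _ tp exit]) simp_all
  show "coal (length (zs @ ys)) b tp c2 (zs @ ys) \<le> coal (length (zs @ xs)) b tp c1 (zs @ xs)"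
    using coupled_append(2)[OF Rb z mz d] MZ T(1) by (intro coal_coupled_le[OF _ tp exit]) (simp_all add: add.commute)
qed

lemma mscE_coupled_le:
  assumes T: "heights_ok T" "distinct (leaves T)" "S' \<in> subtrees T"
    and S': "S' = Node h A (Leaf m) \<or> S' = Node h (Leaf m) A"
    and iA: "i \<in> set (leaves A)" and mi: "m \<noteq> i" and tp: "ereal (ht T) < tp"
    and exit: "\<And>a xs ys. coupled h m i (mset (leaves T)) a xs ys \<Longrightarrow> ereal a < tp \<Longrightarrow>
                 length xs \<le> 1 \<or> tp \<noteq> \<infinity> \<Longrightarrow> c2 ys \<le> c1 xs"
  shows "mscE T tp c2 \<le> mscE T tp c1"
  using T tp exit
proof (induction T arbitrary: tp c1 c2)
  case (Leaf x)
  then show ?case using S' by auto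
next
  case (Node hp l r)
  have hl: "heights_ok l" "ht l < hp" "heights_ok r" "ht r < hp" using Node.prems(1) by auto
  have dl: "distinct (leaves l)" "distinct (leaves r)" "set (leaves l) \<inter> set (leaves r) = {}"
    using Node.prems(2) by auto
  have htp: "ereal hp < tp" using Node.prems(4) by simp
  have mS': "m \<in> set (leaves S')" "i \<in> set (leaves S')" using S' iA by auto
  consider "S' = Node hp l r" | "S' \<in> subtrees l" | "S' \<in> subtrees r" using Node.prems(3) by auto
  then show ?case
  proof cases
    case 1
    then have "heights_ok A" "ht A < h" "Node hp l r = Node h A (Leaf m) \<or> Node hp l r = Node h (Leaf m) A"
      using S' Node.prems(1) by auto
    then show ?thesis
      by (rule mscE_pendant_coupled_le[OF _ _ _ Node.prems(2) iA mi]) (use htp Node.prems(5) 1 S' in auto)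
  next
    case 2
    have "m \<notin> set (leaves r)" "i \<notin> set (leaves r)" using subtrees_leaves[OF 2] mS' dl(3) by auto
    note append = coal_coupled_append_le(1)[OF _ _ _ this _ Node.prems(2) htp Node.prems(5)]
    show ?thesis unfolding mscE.simps
    proof (rule Node.IH(1)[OF hl(1) dl(1) 2])
      fix a xs ys assume "coupled h m i (mset (leaves l)) a xs ys" "ereal a < ereal hp"
      then show "mscE r (ereal hp) (\<lambda>ls2. coal (length (ys @ ls2)) hp tp c2 (ys @ ls2))
          \<le> mscE r (ereal hp) (\<lambda>ls2. coal (length (xs @ ls2)) hp tp c1 (xs @ ls2))"
        using hl by (intro mscE_mono_exit[OF hl(3)] append) auto
    qed (use hl in auto)
  next
    case 3
    have "m \<notin> set (leaves l)" "i \<notin> set (leaves l)" using subtrees_leaves[OF 3] mS' dl(3) by auto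
    note append = coal_coupled_append_le(2)[OF _ _ _ this _ Node.prems(2) htp Node.prems(5)]
    show ?thesis unfolding mscE.simps
    proof (rule mscE_mono_exit[OF hl(1)])
      fix ls1 assume ls1: "exit_lineages l (ereal hp) ls1"
      show "mscE r (ereal hp) (\<lambda>ls2. coal (length (ls1 @ ls2)) hp tp c2 (ls1 @ ls2))
          \<le> mscE r (ereal hp) (\<lambda>ls2. coal (length (ls1 @ ls2)) hp tp c1 (ls1 @ ls2))"
        using hl ls1 by (intro Node.IH(2)[OF hl(3) dl(2) 3] append) (auto simp: add.commute)
    qed (use hl in auto)
  qed
qed

section \<open>The expected gain is positive\<close>

definition gain_ge :: "real \<Rightarrow> nat \<Rightarrow> real \<Rightarrow> utree list \<Rightarrow> bool" where
  "gain_ge h i z ls \<longleftrightarrow> (\<exists>Y\<in>set ls. i \<in> set (leaves Y) \<and> z \<le> gain h i Y)"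

lemma gain_ge_append: "gain_ge h i z xs \<Longrightarrow> gain_ge h i z (xs @ ys)" "gain_ge h i z xs \<Longrightarrow> gain_ge h i z (ys @ xs)"
  by (auto simp: gain_ge_def)

text \<open>Coalescences after time h do not change the lineage of i at time h.\<close>
lemma gain_ge_merge_pair:
  assumes Q: "gain_ge h i z xs" and d: "distinct (forest_leaves xs)" and ha: "h \<le> a" and t: "0 < t"
    and p: "p \<in> pairs (length xs)"
  shows "gain_ge h i z (merge_pair (a + t) p xs)"
proof -
  obtain Y where Y: "Y \<in> set xs" "i \<in> set (leaves Y)" "z \<le> gain h i Y"
    using Q by (auto simp: gain_ge_def)
  let ?N = "Node (a + t) (xs ! fst p) (xs ! snd p)"
  have N: "?N \<in> set (merge_pair (a + t) p xs)" by (rule merged_in_merge_pair)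
  have disj: "set (leaves (xs ! fst p)) \<inter> set (leaves (xs ! snd p)) = {}"
    using forest_leaves_disjoint[OF d] mem_pairsD[OF p] by auto
  consider "Y = xs ! fst p" | "Y = xs ! snd p" | "Y \<noteq> xs ! fst p" "Y \<noteq> xs ! snd p" by blast
  then show ?thesis
  proof cases
    case 1
    then have "gain h i ?N = gain h i Y" using Y ha t by (simp add: gain_def)
    then show ?thesis using N Y 1 unfolding gain_ge_def by (intro bexI[of _ ?N]) auto
  next
    case 2
    then have "gain h i ?N = gain h i Y" using Y ha t disj by (auto simp: gain_def)
    then show ?thesis using N Y 2 unfolding gain_ge_def by (intro bexI[of _ ?N]) auto
  next
    case 3
    then show ?thesis using in_merge_pairI[OF p Y(1)] Y unfolding gain_ge_def by blast
  qed
qed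

lemma charges_coal_gain:
  assumes xs: "lineages (mset (leaves T)) a xs" "distinct (leaves T)"
    and ha: "h \<le> a" and tp: "ereal a < tp" and Q: "gain_ge h i z xs"
  shows "charges (\<lambda>c. coal (length xs) a tp c xs)
           (\<lambda>ls. exit_lineages T tp ls \<and> gain_ge h i z ls \<and> (tp = \<infinity> \<longrightarrow> length ls \<le> 1))
           (if tp = \<infinity> then 1 else exp (- real (length (leaves T) * length (leaves T)) * (real_of_ereal tp - a)))"
proof (cases "tp = \<infinity>")
  case True
  let ?I = "\<lambda>a xs. lineages (mset (leaves T)) a xs \<and> gain_ge h i z xs \<and> h \<le> a"
  show ?thesis
  proof (rule chargesI)
    fix c and \<kappa> :: ennreal
    assume hyp: "\<And>ls. exit_lineages T tp ls \<and> gain_ge h i z ls \<and> (tp = \<infinity> \<longrightarrow> length ls \<le> 1) \<Longrightarrow> \<kappa> \<le> c ls"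
    have "\<kappa> \<le> coal (length xs) a \<infinity> c xs"
    proof (rule coal_root_ge[where I = ?I])
      fix a xs and t :: real and p assume I: "?I a xs" and t: "0 < t" and p: "p \<in> pairs (length xs)"
      have "distinct (forest_leaves xs)" using I xs(2) by (metis lineages_def mset_eq_imp_distinct_iff)
      then show "?I (a + t) (merge_pair (a + t) p xs)"
        using lineages_merge_pair I t p gain_ge_merge_pair by auto
    next
      fix a xs assume I: "?I a xs" "length xs \<le> 1"
      have "exit_lineages T \<infinity> xs" using I exit_lineagesI[of T a xs \<infinity>] by simp
      then show "\<kappa> \<le> c xs" using hyp True I by simp
    qed (use xs ha Q in auto)
    then show "ennreal (if tp = \<infinity> then 1 else exp (- real (length (leaves T) * length (leaves T))
        * (real_of_ereal tp - a))) * \<kappa> \<le> coal (length xs) a tp c xs"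
      using True by simp
  qed simp
next
  case False
  then obtain \<beta> where \<beta>: "tp = ereal \<beta>" using tp by (cases tp) auto
  have "charges (\<lambda>c. coal (length xs) a (ereal \<beta>) c xs)
      (\<lambda>ls. exit_lineages T tp ls \<and> gain_ge h i z ls \<and> (tp = \<infinity> \<longrightarrow> length ls \<le> 1))
      (exp (- real (length (leaves T) * length (leaves T)) * (\<beta> - a)))"
    using lineages_length_le[OF xs(1)] exit_lineagesI[OF xs(1) tp] tp Q \<beta>
    by (intro charges_coal_no_coalescence) auto
  then show ?thesis using \<beta> by simp
qed

lemma charges_mscE_Node_gain:
  assumes l: "charges (mscE l (ereal hp)) Pl \<mu>l" and r: "charges (mscE r (ereal hp)) Pr \<mu>r"
    and P: "\<And>ls1 ls2. Pl ls1 \<Longrightarrow> Pr ls2 \<Longrightarrow>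
              exit_lineages l (ereal hp) ls1 \<and> exit_lineages r (ereal hp) ls2 \<and> gain_ge h i z (ls1 @ ls2)"
    and d: "distinct (leaves (Node hp l r))" and h: "h \<le> hp" and tp: "ereal hp < tp"
  shows "\<exists>\<mu>. charges (mscE (Node hp l r) tp)
           (\<lambda>ls. exit_lineages (Node hp l r) tp ls \<and> gain_ge h i z ls \<and> (tp = \<infinity> \<longrightarrow> length ls \<le> 1)) \<mu>"
proof -
  let ?N = "length (leaves (Node hp l r))"
  let ?\<nu> = "if tp = \<infinity> then 1 else exp (- real (?N * ?N) * (real_of_ereal tp - hp))"
  have "charges (mscE (Node hp l r) tp)
      (\<lambda>ls. exit_lineages (Node hp l r) tp ls \<and> gain_ge h i z ls \<and> (tp = \<infinity> \<longrightarrow> length ls \<le> 1)) (\<mu>l * (\<mu>r * ?\<nu>))"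
  proof (rule charges_mscE_Node[OF l r])
    fix ls1 ls2 assume "Pl ls1" "Pr ls2"
    with P have "lineages (mset (leaves (Node hp l r))) hp (ls1 @ ls2)" "gain_ge h i z (ls1 @ ls2)"
      using exit_lineages_Node by blast+
    then show "charges (\<lambda>c. coal (length (ls1 @ ls2)) hp tp c (ls1 @ ls2))
        (\<lambda>ls. exit_lineages (Node hp l r) tp ls \<and> gain_ge h i z ls \<and> (tp = \<infinity> \<longrightarrow> length ls \<le> 1)) ?\<nu>"
      using d h tp by (intro charges_coal_gain) auto
  qed simp
  then show ?thesis ..
qed

lemma charges_coal_cherry:
  assumes xs: "lineages (mset (leaves T)) hw xs" "distinct (leaves T)"
    and p0: "(u, v) \<in> pairs (length xs)"
    and uv: "xs ! u = Leaf i \<and> xs ! v = V \<or> xs ! u = V \<and> xs ! v = Leaf i" and iV: "i \<notin> set (leaves V)"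
    and tp: "hw < tp" "tp \<le> h"
  defines "N \<equiv> length (leaves T)"
  shows "charges (\<lambda>c. coal (length xs) hw (ereal tp) c xs)
           (\<lambda>ls. exit_lineages T (ereal tp) ls \<and> gain_ge h i ((tp - hw) / 4) ls)
           ((tp - hw) / 4 * (exp (- real (N * N) * (tp - hw)) / real (N * N) * exp (- real (N * N) * (tp - hw))))"
proof -
  let ?\<delta> = "tp - hw"
  have l2: "2 \<le> length xs" using mem_pairsD[OF p0] by simp
  have "length xs \<le> N" using lineages_length_le[OF xs(1)] by (simp add: N_def)
  then have "charges (\<lambda>c. coal (Suc (length xs - 1)) hw (ereal tp) c xs)
      (\<lambda>ls. exit_lineages T (ereal tp) ls \<and> gain_ge h i (?\<delta> / 4) ls)
      ((?\<delta> / 2 - ?\<delta> / 4) * (exp (- real (N * N) * (tp - hw)) / real (N * N) * exp (- real (N * N) * (tp - hw))))"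
  proof (rule charges_coal_event[OF l2 _ p0])
    fix t assume t: "?\<delta> / 4 \<le> t" "t \<le> ?\<delta> / 2"
    moreover have "0 < ?\<delta> / 4" using tp by simp
    ultimately have t0: "0 < t" by linarith
    let ?M = "merge_pair (hw + t) (u, v) xs"
    have "exit_lineages T (ereal tp) ?M"
      by (rule exit_lineagesI[OF lineages_merge_pair[OF xs(1) t0 p0]]) (use t tp in simp)
    moreover have "gain_ge h i (?\<delta> / 4) ?M"
    proof -
      have "?\<delta> / 4 \<le> (h - (hw + t)) / 2" using t tp by simp
      moreover have "hw + t < h" using t tp by simp
      ultimately have "?\<delta> / 4 \<le> gain h i (Node (hw + t) (xs ! u) (xs ! v))"
        using uv gain_cherry[OF iV] by force
      then show ?thesis using merged_in_merge_pair[of "hw + t" xs "(u, v)"] uv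
        unfolding gain_ge_def by (intro bexI) auto
    qed
    ultimately show "exit_lineages T (ereal tp) ?M \<and> gain_ge h i (?\<delta> / 4) ?M" ..
  qed (use tp in \<open>auto simp: field_simps\<close>)
  moreover have "Suc (length xs - 1) = length xs" using l2 by simp
  moreover have "?\<delta> / 2 - ?\<delta> / 4 = ?\<delta> / 4" by simp
  ultimately show ?thesis by (simp only:)
qed

lemma exit_lineages_leaves_subset:
  "exit_lineages T tp ls \<Longrightarrow> V \<in> set ls \<Longrightarrow> set (leaves V) \<subseteq> set (leaves T)"
  unfolding exit_lineages_def by (metis leaves_subset_forest_leaves set_mset_mset)

lemma mscE_charges_gain_cherry:
  assumes T: "heights_ok (Node hw l r)" "distinct (leaves (Node hw l r))" and leaf: "l = Leaf i \<or> r = Leaf i"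
    and tp: "hw < tp" "tp \<le> h"
  shows "\<exists>\<mu>. charges (mscE (Node hw l r) (ereal tp))
           (\<lambda>ls. exit_lineages (Node hw l r) (ereal tp) ls \<and> gain_ge h i ((tp - hw) / 4) ls) \<mu>"
proof -
  let ?T = "Node hw l r"
  let ?\<delta> = "tp - hw"
  let ?N = "length (leaves ?T)"
  let ?C = "?\<delta> / 4 * (exp (- real (?N * ?N) * ?\<delta>) / real (?N * ?N) * exp (- real (?N * ?N) * ?\<delta>))"
  let ?Q = "\<lambda>ls. exit_lineages ?T (ereal tp) ls \<and> gain_ge h i (?\<delta> / 4) ls"
  have hl: "heights_ok l" "ht l < hw" "heights_ok r" "ht r < hw" using T(1) by auto
  have dl: "set (leaves l) \<inter> set (leaves r) = {}" using T(2) by auto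
  obtain \<mu>l \<mu>r where exit_l: "charges (mscE l (ereal hw)) (exit_lineages l (ereal hw)) \<mu>l"
    and exit_r: "charges (mscE r (ereal hw)) (exit_lineages r (ereal hw)) \<mu>r"
    using mscE_charges_exit hl by metis
  have leaf_exit: "exit_lineages (Leaf i) (ereal hw) [Leaf i]"
    using heights_ok_ht_nonneg[OF hl(1)] hl(2) by (auto simp: exit_lineages_def)
  have "0 < ?N" by (rule length_leaves_pos)
  then have "0 < real (?N * ?N)" by (simp only: of_nat_0_less_iff nat_0_less_mult_iff)
  then have C: "0 < ?C" using tp by (intro mult_pos_pos divide_pos_pos) auto
  have cherry: "charges (\<lambda>c. coal (length (ls1 @ ls2)) hw (ereal tp) c (ls1 @ ls2)) ?Q ?C"
    if "exit_lineages l (ereal hw) ls1" "exit_lineages r (ereal hw) ls2" "(u, v) \<in> pairs (length (ls1 @ ls2))"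
      "(ls1 @ ls2) ! u = Leaf i \<and> (ls1 @ ls2) ! v = V \<or> (ls1 @ ls2) ! u = V \<and> (ls1 @ ls2) ! v = Leaf i"
      "i \<notin> set (leaves V)"
    for ls1 ls2 u v V
    using charges_coal_cherry[OF exit_lineages_Node[OF that(1,2)] T(2) that(3-5) tp] by simp
  from leaf show ?thesis
  proof
    assume l: "l = Leaf i"
    have "charges (mscE ?T (ereal tp)) ?Q (1 * (\<mu>r * ?C))"
    proof (rule charges_mscE_Node[OF charges_mscE_Leaf[of i "ereal hw", folded l] exit_r _ C])
      fix ls1 ls2 assume "ls1 = [l]" and ls2: "exit_lineages r (ereal hw) ls2"
      moreover from this have ls1: "exit_lineages l (ereal hw) ls1" using leaf_exit l by simp
      moreover have "ls2 \<noteq> []" using ls2 by (rule exit_lineages_not_Nil)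
      moreover have "i \<notin> set (leaves (ls2 ! 0))"
        using exit_lineages_leaves_subset[OF ls2 nth_mem] calculation dl l by fastforce
      ultimately show "charges (\<lambda>c. coal (length (ls1 @ ls2)) hw (ereal tp) c (ls1 @ ls2)) ?Q ?C"
        using cherry[OF ls1 ls2, of 0 1] l by (auto simp: exit_lineages_def pairs_def Suc_le_eq)
    qed
    then show ?thesis by blast
  next
    assume r: "r = Leaf i"
    have "charges (mscE ?T (ereal tp)) ?Q (\<mu>l * (1 * ?C))"
    proof (rule charges_mscE_Node[OF exit_l charges_mscE_Leaf[of i "ereal hw", folded r] _ C])
      fix ls1 ls2 assume ls1: "exit_lineages l (ereal hw) ls1" and "ls2 = [r]"
      moreover from this have ls2: "exit_lineages r (ereal hw) ls2" using leaf_exit r by simp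
      moreover have "ls1 \<noteq> []" using ls1 by (rule exit_lineages_not_Nil)
      moreover have "i \<notin> set (leaves (ls1 ! 0))"
        using exit_lineages_leaves_subset[OF ls1 nth_mem] calculation dl r by fastforce
      ultimately show "charges (\<lambda>c. coal (length (ls1 @ ls2)) hw (ereal tp) c (ls1 @ ls2)) ?Q ?C"
        using cherry[OF ls1 ls2, of 0 "length ls1"] r by (auto simp: exit_lineages_def pairs_def nth_append)
    qed
    then show ?thesis by blast
  qed
qed

text \<open>
  The event: in the population just above the parent of leaf i, the leaf coalesces with its sibling
  lineage during the second quarter of the time left before tp, and nothing else coalesces on the
  way up to tp.\<close>
lemma mscE_charges_gain:
  assumes "heights_ok T" "distinct (leaves T)" "i \<in> set (leaves T)" "T \<noteq> Leaf i" "ht T < tp" "tp \<le> h"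
  shows "\<exists>z>0. \<exists>\<mu>. charges (mscE T (ereal tp)) (\<lambda>ls. exit_lineages T (ereal tp) ls \<and> gain_ge h i z ls) \<mu>"
  using assms
proof (induction T arbitrary: tp)
  case (Node hw l r)
  let ?T = "Node hw l r"
  let ?E = "exp (- real (length (leaves ?T) * length (leaves ?T)) * (tp - hw))"
  let ?Q = "\<lambda>z ls. exit_lineages ?T (ereal tp) ls \<and> gain_ge h i z ls"
  have hl: "heights_ok l" "ht l < hw" "heights_ok r" "ht r < hw" using Node.prems(1) by auto
  have dl: "distinct (leaves l)" "distinct (leaves r)" using Node.prems(2) by auto
  have hw: "hw < tp" using Node.prems(5) by simp
  obtain \<mu>l \<mu>r where exit_l: "charges (mscE l (ereal hw)) (exit_lineages l (ereal hw)) \<mu>l"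
    and exit_r: "charges (mscE r (ereal hw)) (exit_lineages r (ereal hw)) \<mu>r"
    using mscE_charges_exit hl by metis
  consider "l = Leaf i \<or> r = Leaf i" | "i \<in> set (leaves l)" "l \<noteq> Leaf i" | "i \<in> set (leaves r)" "r \<noteq> Leaf i"
    using Node.prems(3) by auto
  then show ?case
  proof cases
    case 1
    obtain \<mu> where "charges (mscE ?T (ereal tp)) (?Q ((tp - hw) / 4)) \<mu>"
      using mscE_charges_gain_cherry[OF Node.prems(1,2) 1 hw Node.prems(6)] by blast
    moreover have "0 < (tp - hw) / 4" using hw by simp
    ultimately show ?thesis by blast
  next
    case 2
    then obtain z \<mu> where z: "0 < z" and IH: "charges (mscE l (ereal hw)) (\<lambda>ls. exit_lineages l (ereal hw) ls \<and> gain_ge h i z ls) \<mu>"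
      using Node.IH(1)[OF hl(1) dl(1) _ _ hl(2)] hw Node.prems(6) by force
    have "charges (mscE ?T (ereal tp)) (?Q z) (\<mu> * (\<mu>r * ?E))"
      using hw by (intro charges_mscE_Node[OF IH exit_r] charges_coal_Node_no_coalescence)
        (auto intro: gain_ge_append)
    then show ?thesis using z by blast
  next
    case 3
    then obtain z \<mu> where z: "0 < z" and IH: "charges (mscE r (ereal hw)) (\<lambda>ls. exit_lineages r (ereal hw) ls \<and> gain_ge h i z ls) \<mu>"
      using Node.IH(2)[OF hl(3) dl(2) _ _ hl(4)] hw Node.prems(6) by force
    have "charges (mscE ?T (ereal tp)) (?Q z) (\<mu>l * (\<mu> * ?E))"
      using hw by (intro charges_mscE_Node[OF exit_l IH] charges_coal_Node_no_coalescence)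
        (auto intro: gain_ge_append)
    then show ?thesis using z by blast
  qed
qed simp

lemma mscE_charges_gain_pendant:
  assumes T: "T = Node h A (Leaf m) \<or> T = Node h (Leaf m) A" "heights_ok T" "distinct (leaves T)"
    and A: "charges (mscE A (ereal h)) (\<lambda>ls. exit_lineages A (ereal h) ls \<and> gain_ge h i z ls) \<mu>A"
    and tp: "ereal h < tp"
  shows "\<exists>\<mu>. charges (mscE T tp) (\<lambda>ls. exit_lineages T tp ls \<and> gain_ge h i z ls \<and> (tp = \<infinity> \<longrightarrow> length ls \<le> 1)) \<mu>"
proof -
  have "heights_ok (Leaf m)" "ht (Leaf m) < h" using T(1,2) heights_ok_ht_nonneg[of A] by auto
  then obtain \<mu>m where leaf: "charges (mscE (Leaf m) (ereal h)) (exit_lineages (Leaf m) (ereal h)) \<mu>m"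
    using mscE_charges_exit by blast
  from T(1) show ?thesis
  proof
    assume T': "T = Node h A (Leaf m)"
    show ?thesis unfolding T'
      by (rule charges_mscE_Node_gain[OF A leaf]) (use T T' tp in \<open>auto intro: gain_ge_append\<close>)
  next
    assume T': "T = Node h (Leaf m) A"
    show ?thesis unfolding T'
      by (rule charges_mscE_Node_gain[OF leaf A]) (use T T' tp in \<open>auto intro: gain_ge_append\<close>)
  qed
qed

lemma mscE_charges_gain_up:
  assumes "heights_ok T" "distinct (leaves T)" "S' \<in> subtrees T"
    and S': "S' = Node h A (Leaf m) \<or> S' = Node h (Leaf m) A"
    and A: "charges (mscE A (ereal h)) (\<lambda>ls. exit_lineages A (ereal h) ls \<and> gain_ge h i z ls) \<mu>A"
    and "ereal (ht T) < tp"
  shows "\<exists>\<mu>. charges (mscE T tp) (\<lambda>ls. exit_lineages T tp ls \<and> gain_ge h i z ls \<and> (tp = \<infinity> \<longrightarrow> length ls \<le> 1)) \<mu>"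
  using assms(1-3,6)
proof (induction T arbitrary: tp)
  case (Leaf x)
  then show ?case using S' by auto
next
  case (Node hp l r)
  have hl: "heights_ok l" "ht l < hp" "heights_ok r" "ht r < hp" using Node.prems(1) by auto
  have dl: "distinct (leaves l)" "distinct (leaves r)" using Node.prems(2) by auto
  have htp: "ereal hp < tp" using Node.prems(4) by simp
  obtain \<mu>l \<mu>r where exit_l: "charges (mscE l (ereal hp)) (exit_lineages l (ereal hp)) \<mu>l"
    and exit_r: "charges (mscE r (ereal hp)) (exit_lineages r (ereal hp)) \<mu>r"
    using mscE_charges_exit hl by metis
  have ht_S': "ht S' = h" using S' by auto
  consider "S' = Node hp l r" | "S' \<in> subtrees l" | "S' \<in> subtrees r" using Node.prems(3) by auto
  then show ?case
  proof cases
    case 1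
    then have "Node hp l r = Node h A (Leaf m) \<or> Node hp l r = Node h (Leaf m) A" "ereal h < tp"
      using S' htp by auto
    then show ?thesis by (rule mscE_charges_gain_pendant[OF _ Node.prems(1,2) A])
  next
    case 2
    have "h \<le> hp" using subtrees_ht_le[OF 2 hl(1)] ht_S' hl(2) by simp
    obtain \<mu> where IH: "charges (mscE l (ereal hp))
        (\<lambda>ls. exit_lineages l (ereal hp) ls \<and> gain_ge h i z ls \<and> (ereal hp = \<infinity> \<longrightarrow> length ls \<le> 1)) \<mu>"
      using Node.IH(1)[OF hl(1) dl(1) 2, of "ereal hp"] hl(2) by auto
    show ?thesis
      by (rule charges_mscE_Node_gain[OF IH exit_r]) (use Node.prems(2) htp \<open>h \<le> hp\<close> in \<open>auto intro: gain_ge_append\<close>)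
  next
    case 3
    have "h \<le> hp" using subtrees_ht_le[OF 3 hl(3)] ht_S' hl(4) by simp
    obtain \<mu> where IH: "charges (mscE r (ereal hp))
        (\<lambda>ls. exit_lineages r (ereal hp) ls \<and> gain_ge h i z ls \<and> (ereal hp = \<infinity> \<longrightarrow> length ls \<le> 1)) \<mu>"
      using Node.IH(2)[OF hl(3) dl(2) 3, of "ereal hp"] hl(4) by auto
    show ?thesis
      by (rule charges_mscE_Node_gain[OF exit_l IH]) (use Node.prems(2) htp \<open>h \<le> hp\<close> in \<open>auto intro: gain_ge_append\<close>)
  qed
qed

lemma expected_fp_finite:
  assumes "heights_ok S"
  shows "expected_fp S x < \<infinity>"
proof (cases S)
  case (Node hr l r)
  let ?c = "\<lambda>ls. ennreal (fp (hd ls) x)"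
  let ?K = "ennreal (hr + 2 * real (length (leaves S)))"
  have hl: "heights_ok l" "ht l < hr" "heights_ok r" "ht r < hr" using assms Node by auto
  have hr0: "0 \<le> hr" using heights_ok_ht_nonneg[OF assms] Node by simp
  have "coal (length (ls1 @ ls2)) hr \<infinity> ?c (ls1 @ ls2) \<le> ?K"
    if "exit_lineages l (ereal hr) ls1" "exit_lineages r (ereal hr) ls2" for ls1 ls2
  proof -
    let ?I = "\<lambda>a xs. lineages (mset (leaves S)) a xs \<and> 0 \<le> a"
    have L: "lineages (mset (leaves S)) hr (ls1 @ ls2)" using exit_lineages_Node[OF that] Node by simp
    have "coal (length (ls1 @ ls2)) hr \<infinity> ?c (ls1 @ ls2) \<le> ennreal (hr + 2 * real (length (ls1 @ ls2)))"
    proof (rule coal_le_root[where I = ?I])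
      fix a xs assume I: "?I a xs" and l1: "length xs \<le> 1"
      have "xs \<noteq> []" using I by (auto simp: lineages_def)
      then obtain Y where xs: "xs = [Y]" using l1 by (cases xs) auto
      then have "fp Y x \<le> a" using I fp_le_ht[of Y x] by (auto simp: lineages_def)
      then show "?c xs \<le> ennreal a" using xs by (simp add: ennreal_leI)
    qed (use L hr0 lineages_merge_pair in auto)
    also have "\<dots> \<le> ?K" using lineages_length_le[OF L] by (intro ennreal_leI) simp
    finally show ?thesis .
  qed
  then have "expected_fp S x \<le> ?K"
    unfolding expected_fp_def Node mscE.simps using hl
    by (intro mscE_le_const) (simp_all add: Node)
  then show ?thesis using order.strict_trans1 by fastforce
qed (simp add: expected_fp_def mscE_Leaf)

lemma fp_pendant_leaf_gt:
  assumes "heights_ok S" "distinct (leaves S)" "S' \<in> subtrees S"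
    and S': "S' = Node h A (Leaf m) \<or> S' = Node h (Leaf m) A"
    and "i \<in> set (leaves A)" "2 \<le> length (leaves A)"
  shows "fp S i < fp S m"
proof -
  have hS': "heights_ok S'" and dS': "distinct (leaves S')"
    using subtrees_heights_ok subtrees_distinct assms(1-3) by blast+
  then have "heights_ok A" "ht A < h" "m \<notin> set (leaves A)" using S' by auto
  then have "fp S' i < fp S' m"
    using S' fp_leaf_sibling_gt[of A h i m] assms(5,6) fp_Node_swap[of A "Leaf m" h] by auto
  moreover have "fp S m - fp S i = fp S' m - fp S' i"
    using fp_diff_subtree[OF assms(2,3)] S' assms(5) by auto
  ultimately show ?thesis by linarith
qed

lemma expected_fp_pendant_leaf_gt:
  assumes hS: "heights_ok S" and dS: "distinct (leaves S)" and S'S: "S' \<in> subtrees S"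
    and S': "S' = Node h A (Leaf m) \<or> S' = Node h (Leaf m) A"
    and iA: "i \<in> set (leaves A)" and A2: "2 \<le> length (leaves A)"
  shows "expected_fp S i < expected_fp S m"
proof -
  have "heights_ok S'" "distinct (leaves S')" using subtrees_heights_ok subtrees_distinct hS dS S'S by blast+
  then have hA: "heights_ok A" "ht A < h" "distinct (leaves A)" "m \<noteq> i" using S' iA by auto
  have "A \<noteq> Leaf i" using A2 by auto
  let ?m = "\<lambda>ls. ennreal (fp (hd ls) m)"
  let ?i = "\<lambda>ls. ennreal (fp (hd ls) i)"
  let ?gain = "\<lambda>ls. ennreal (gain h i (hd ls))"
  have "expected_fp S i + mscE S \<infinity> ?gain \<le> mscE S \<infinity> (\<lambda>ls. ?i ls + ?gain ls)"
    unfolding expected_fp_def by (rule mscE_superadditive)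
  also have "\<dots> \<le> expected_fp S m"
    unfolding expected_fp_def
    by (rule mscE_coupled_le[OF hS dS S'S S' iA hA(4)]) (auto intro: coupled_exit)
  finally have le: "expected_fp S i + mscE S \<infinity> ?gain \<le> expected_fp S m" .
  obtain z \<mu>A where "0 < z"
    and "charges (mscE A (ereal h)) (\<lambda>ls. exit_lineages A (ereal h) ls \<and> gain_ge h i z ls) \<mu>A"
    using mscE_charges_gain[OF hA(1,3) iA \<open>A \<noteq> Leaf i\<close> hA(2) order_refl] by blast
  then obtain \<mu> where charge:
    "charges (mscE S \<infinity>) (\<lambda>ls. exit_lineages S \<infinity> ls \<and> gain_ge h i z ls \<and> (\<infinity> = (\<infinity>::ereal) \<longrightarrow> length ls \<le> 1)) \<mu>"
    using mscE_charges_gain_up[OF hS dS S'S S'] by fastforce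
  have "ennreal z \<le> ?gain ls"
    if "exit_lineages S \<infinity> ls \<and> gain_ge h i z ls \<and> (\<infinity> = (\<infinity>::ereal) \<longrightarrow> length ls \<le> 1)" for ls
  proof -
    have "ls \<noteq> []" "length ls \<le> 1" using that exit_lineages_not_Nil by auto
    then obtain Y where "ls = [Y]" by (cases ls) auto
    then show ?thesis using that by (auto simp: gain_ge_def intro: ennreal_leI)
  qed
  with charge have "ennreal \<mu> * ennreal z \<le> mscE S \<infinity> ?gain" by (rule chargesD)
  moreover have "0 < ennreal \<mu> * ennreal z"
    using \<open>0 < z\<close> charges_pos[OF charge] by (simp add: ennreal_mult[symmetric])
  ultimately have "0 < mscE S \<infinity> ?gain" by (rule order.strict_trans2[rotated])
  then show ?thesis
    using le expected_fp_finite[OF hS, of i] ennreal_add_left_cancel_less[of "expected_fp S i" 0]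
    by (metis add.right_neutral order.strict_trans2)
qed

theorem proposition1:
  fixes n m :: nat and S :: utree
  assumes "n \<ge> 3"
    and "species_tree n S"
    and "3 \<le> m" and "m \<le> n"
    and "\<exists>h A. (Node h A (Leaf m) \<in> subtrees S \<or> Node h (Leaf m) A \<in> subtrees S)
               \<and> set (leaves A) = {1..<m}"
  shows "(\<forall>i\<in>{1..<m}. fp S m > fp S i)
       \<and> (\<forall>i\<in>{1..<m}. expected_fp S m > expected_fp S i)"
proof -
  have hS: "heights_ok S" and dS: "distinct (leaves S)" using assms(2) by (auto simp: species_tree_def)
  obtain h A S' where S'S: "S' \<in> subtrees S" and S': "S' = Node h A (Leaf m) \<or> S' = Node h (Leaf m) A"
    and A: "set (leaves A) = {1..<m}"
    using assms(5) by blast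
  have "distinct (leaves A)" using subtrees_distinct[OF S'S dS] S' by auto
  then have "length (leaves A) = m - 1" using A distinct_card by fastforce
  then have "2 \<le> length (leaves A)" using assms(3) by simp
  then show ?thesis
    using fp_pendant_leaf_gt[OF hS dS S'S S'] expected_fp_pendant_leaf_gt[OF hS dS S'S S'] A by auto
qed

end
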